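(* Let $H$ be a Hopf algebra and $C$ a right $H$-Hopf-Galois co-object with cotranslation map $\tau$. Then $C$ is a Hopf heap with operation $\chi_{(C,H)}(a\otimes b\otimes c)=[a,b,c]=a\cdot\tau(b\otimes c)$, this Hopf heap has a Grunspan map, namely $\vartheta(c)=\sum c_{(1)}\cdot S\tau(c_{(3)}\otimes c_{(2)})$, and the map $\mathrm{Tn}^rC\to H$, $\tau_a^b\mapsto\tau(a\otimes b)$, is a well-defined isomorphism of Hopf algebras (with inverse $h\mapsto\tau_{e_{(1)}}^{e_{(2)}\cdot h}$ for any $e$ with $\varepsilon(e)=1$).
   Context: Work over a field $\mathbb{F}$; coalgebras coassociative, counital, nonzero, Sweedler notation; $C^{\mathrm{co}}$ co-opposite. For a Hopf algebra $H$ (antipode $S$), a right $H$-module coalgebra is a coalgebra $C$ with right action $c\cdot h$ satisfying $\Delta(c\cdot h)=\sum c_{(1)}\cdot h_{(1)}\otimes c_{(2)}\cdot h_{(2)}$, $\varepsilon(c\cdot h)=\varepsilon(c)\varepsilon(h)$; it is a right Hopf-Galois co-object if (a) $\ker\varepsilon=\mathrm{span}\{c\cdot h-c\varepsilon(h)\}$ and (b) $\mathrm{can}:C\otimes H\to C\otimes C$, $c\otimes h\mapsto\sum c_{(1)}\otimes c_{(2)}\cdot h$ is bijective. The cotranslation map is $\tau=(\varepsilon\otimes\mathrm{id})\circ\mathrm{can}^{-1}:C\otimes C\to H$. A Hopf heap is a coalgebra $C$ with a coalgebra map $\chi:C\otimes C^{\mathrm{co}}\otimes C\to C$, $a\otimes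 b\otimes c\mapsto[a,b,c]$, with $[[a,b,c],d,e]=[a,b,[c,d,e]]$ and $\sum[c_{(1)},c_{(2)},a]=\sum[a,c_{(1)},c_{(2)}]=\varepsilon(c)a$. A Grunspan map is a coalgebra map $\vartheta:C\to C$ with $[[a,b,\vartheta(c)],d,e]=[a,[d,c,b],e]$. $\mathrm{Tn}^rC$ is the span of $\tau_a^b:c\mapsto[c,a,b]$, a Hopf algebra with product $\tau_a^b\tau_c^d=\tau_c^d\circ\tau_a^b=\tau_a^{[b,c,d]}$, unit $\mathrm{id}$, $\Delta(\tau_a^b)=\sum\tau_{a_{(2)}}^{b_{(1)}}\otimes\tau_{a_{(1)}}^{b_{(2)}}$, $\varepsilon(\tau_a^b)=\varepsilon(a)\varepsilon(b)$. *)

theory Defs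
  imports Complex_Main "HOL-Library.Poly_Mapping" "HOL-Library.Function_Algebras"
begin

(* Vector spaces over a field 'k are modelled as spaces of finitely supported
functions 'b \<Rightarrow>\<^sub>0 'k (every vector space has a basis, so this loses no generality).
The tensor product of ('a,'k) vec and ('b,'k) vec is ('a \<times> 'b,'k) vec, with
elementary tensors tsr x y.  Linear maps out of a tensor product are given by
multilinear maps; tlift B is the linear map on the tensor product induced by a
bilinear B (evaluated on basis vectors), which renders Sweedler sums faithfully. *)

type_synonym ('b,'k) vec = "'b \<Rightarrow>\<^sub>0 'k"

definition sc :: "'k::field \<Rightarrow> ('b,'k) vec \<Rightarrow> ('b,'k) vec" where
  "sc c v = Poly_Mapping.map (\<lambda>x. c * x) v"

definition bv :: "'b \<Rightarrow> ('b,'k::field) vec" where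
  "bv i = Poly_Mapping.single i 1"

definition tsr :: "('a,'k::field) vec \<Rightarrow> ('b,'k) vec \<Rightarrow> ('a \<times> 'b,'k) vec" where
  "tsr x y = (\<Sum>p\<in>Poly_Mapping.keys x \<times> Poly_Mapping.keys y. Poly_Mapping.single p (Poly_Mapping.lookup x (fst p) * Poly_Mapping.lookup y (snd p)))"

definition tlift :: "(('a,'k::field) vec \<Rightarrow> ('b,'k) vec \<Rightarrow> ('u,'k) vec)
    \<Rightarrow> ('a \<times> 'b,'k) vec \<Rightarrow> ('u,'k) vec" where
  "tlift B t = (\<Sum>p\<in>Poly_Mapping.keys t. sc (Poly_Mapping.lookup t p) (B (bv (fst p)) (bv (snd p))))"

definition tassoc :: "('a \<times> ('b \<times> 'c),'k::field) vec \<Rightarrow> (('a \<times> 'b) \<times> 'c,'k) vec" where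
  "tassoc t = tlift (\<lambda>x yz. tlift (\<lambda>y z. tsr (tsr x y) z) yz) t"

definition lin :: "(('a,'k::field) vec \<Rightarrow> ('b,'k) vec) \<Rightarrow> bool" where
  "lin f \<longleftrightarrow> (\<forall>x y. f (x + y) = f x + f y) \<and> (\<forall>c x. f (sc c x) = sc c (f x))"

definition linf :: "(('a,'k::field) vec \<Rightarrow> 'k) \<Rightarrow> bool" where
  "linf f \<longleftrightarrow> (\<forall>x y. f (x + y) = f x + f y) \<and> (\<forall>c x. f (sc c x) = c * f x)"

definition bilin :: "(('a,'k::field) vec \<Rightarrow> ('b,'k) vec \<Rightarrow> ('c,'k) vec) \<Rightarrow> bool" where
  "bilin B \<longleftrightarrow> (\<forall>x. lin (B x)) \<and> (\<forall>y. lin (\<lambda>x. B x y))"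

definition trilin :: "(('a,'k::field) vec \<Rightarrow> ('b,'k) vec \<Rightarrow> ('c,'k) vec \<Rightarrow> ('d,'k) vec) \<Rightarrow> bool" where
  "trilin T \<longleftrightarrow> (\<forall>x y. lin (T x y)) \<and> (\<forall>x z. lin (\<lambda>y. T x y z)) \<and> (\<forall>y z. lin (\<lambda>x. T x y z))"

definition coalgebra :: "(('c,'k::field) vec \<Rightarrow> ('c \<times> 'c,'k) vec) \<Rightarrow> (('c,'k) vec \<Rightarrow> 'k) \<Rightarrow> bool" where
  "coalgebra \<Delta> \<epsilon> \<longleftrightarrow> lin \<Delta> \<and> linf \<epsilon>
     \<and> (\<forall>c. tlift (\<lambda>x y. tsr (\<Delta> x) y) (\<Delta> c) = tassoc (tlift (\<lambda>x y. tsr x (\<Delta> y)) (\<Delta> c)))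
     \<and> (\<forall>c. tlift (\<lambda>x y. sc (\<epsilon> x) y) (\<Delta> c) = c)
     \<and> (\<forall>c. tlift (\<lambda>x y. sc (\<epsilon> y) x) (\<Delta> c) = c)
     \<and> (\<exists>c::('c,'k) vec. c \<noteq> 0)"

definition coalg_map :: "(('c,'k::field) vec \<Rightarrow> ('c \<times> 'c,'k) vec) \<Rightarrow> (('c,'k) vec \<Rightarrow> 'k)
    \<Rightarrow> (('d,'k) vec \<Rightarrow> ('d \<times> 'd,'k) vec) \<Rightarrow> (('d,'k) vec \<Rightarrow> 'k)
    \<Rightarrow> (('c,'k) vec \<Rightarrow> ('d,'k) vec) \<Rightarrow> bool" where
  "coalg_map \<Delta> \<epsilon> \<Delta>' \<epsilon>' f \<longleftrightarrow> lin f
     \<and> (\<forall>c. \<Delta>' (f c) = tlift (\<lambda>x y. tsr (f x) (f y)) (\<Delta> c))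
     \<and> (\<forall>c. \<epsilon>' (f c) = \<epsilon> c)"

definition hopf_algebra :: "(('h,'k::field) vec \<Rightarrow> ('h,'k) vec \<Rightarrow> ('h,'k) vec) \<Rightarrow> ('h,'k) vec
    \<Rightarrow> (('h,'k) vec \<Rightarrow> ('h \<times> 'h,'k) vec) \<Rightarrow> (('h,'k) vec \<Rightarrow> 'k)
    \<Rightarrow> (('h,'k) vec \<Rightarrow> ('h,'k) vec) \<Rightarrow> bool" where
  "hopf_algebra m u \<Delta> \<epsilon> S \<longleftrightarrow>
     bilin m \<and> (\<forall>x y z. m (m x y) z = m x (m y z)) \<and> (\<forall>x. m u x = x \<and> m x u = x)
     \<and> coalgebra \<Delta> \<epsilon>
     \<and> (\<forall>g h. \<Delta> (m g h) = tlift (\<lambda>a b. tlift (\<lambda>c d. tsr (m a c) (m b d)) (\<Delta> h)) (\<Delta> g))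
     \<and> \<Delta> u = tsr u u
     \<and> (\<forall>g h. \<epsilon> (m g h) = \<epsilon> g * \<epsilon> h) \<and> \<epsilon> u = 1
     \<and> lin S
     \<and> (\<forall>h. tlift (\<lambda>x y. m (S x) y) (\<Delta> h) = sc (\<epsilon> h) u)
     \<and> (\<forall>h. tlift (\<lambda>x y. m x (S y)) (\<Delta> h) = sc (\<epsilon> h) u)"

definition module_coalgebra :: "(('h,'k::field) vec \<Rightarrow> ('h,'k) vec \<Rightarrow> ('h,'k) vec) \<Rightarrow> ('h,'k) vec
    \<Rightarrow> (('h,'k) vec \<Rightarrow> ('h \<times> 'h,'k) vec) \<Rightarrow> (('h,'k) vec \<Rightarrow> 'k)
    \<Rightarrow> (('c,'k) vec \<Rightarrow> ('c \<times> 'c,'k) vec) \<Rightarrow> (('c,'k) vec \<Rightarrow> 'k)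
    \<Rightarrow> (('c,'k) vec \<Rightarrow> ('h,'k) vec \<Rightarrow> ('c,'k) vec) \<Rightarrow> bool" where
  "module_coalgebra m u \<Delta>H \<epsilon>H \<Delta> \<epsilon> act \<longleftrightarrow>
     coalgebra \<Delta> \<epsilon> \<and> bilin act
     \<and> (\<forall>c. act c u = c) \<and> (\<forall>c h g. act (act c h) g = act c (m h g))
     \<and> (\<forall>c h. \<Delta> (act c h) = tlift (\<lambda>c1 c2. tlift (\<lambda>h1 h2. tsr (act c1 h1) (act c2 h2)) (\<Delta>H h)) (\<Delta> c))
     \<and> (\<forall>c h. \<epsilon> (act c h) = \<epsilon> c * \<epsilon>H h)"

definition can_map :: "(('c,'k::field) vec \<Rightarrow> ('c \<times> 'c,'k) vec)
    \<Rightarrow> (('c,'k) vec \<Rightarrow> ('h,'k) vec \<Rightarrow> ('c,'k) vec) \<Rightarrow> ('c \<times> 'h,'k) vec \<Rightarrow> ('c \<times> 'c,'k) vec" where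
  "can_map \<Delta> act = tlift (\<lambda>c h. tlift (\<lambda>c1 c2. tsr c1 (act c2 h)) (\<Delta> c))"

definition hopf_galois_coobject :: "(('h,'k::field) vec \<Rightarrow> ('h,'k) vec \<Rightarrow> ('h,'k) vec) \<Rightarrow> ('h,'k) vec
    \<Rightarrow> (('h,'k) vec \<Rightarrow> ('h \<times> 'h,'k) vec) \<Rightarrow> (('h,'k) vec \<Rightarrow> 'k)
    \<Rightarrow> (('c,'k) vec \<Rightarrow> ('c \<times> 'c,'k) vec) \<Rightarrow> (('c,'k) vec \<Rightarrow> 'k)
    \<Rightarrow> (('c,'k) vec \<Rightarrow> ('h,'k) vec \<Rightarrow> ('c,'k) vec) \<Rightarrow> bool" where
  "hopf_galois_coobject m u \<Delta>H \<epsilon>H \<Delta> \<epsilon> act \<longleftrightarrow>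
     module_coalgebra m u \<Delta>H \<epsilon>H \<Delta> \<epsilon> act
     \<and> {c. \<epsilon> c = 0} = module.span sc {act c h - sc (\<epsilon>H h) c | c h. True}
     \<and> bij (can_map \<Delta> act)"

definition cotrans :: "(('c,'k::field) vec \<Rightarrow> ('c \<times> 'c,'k) vec) \<Rightarrow> (('c,'k) vec \<Rightarrow> 'k)
    \<Rightarrow> (('c,'k) vec \<Rightarrow> ('h,'k) vec \<Rightarrow> ('c,'k) vec) \<Rightarrow> ('c \<times> 'c,'k) vec \<Rightarrow> ('h,'k) vec" where
  "cotrans \<Delta> \<epsilon> act t = tlift (\<lambda>c h. sc (\<epsilon> c) h) (inv (can_map \<Delta> act) t)"

(* Hopf heap: chi a b c = [a,b,c] is a coalgebra map C \<otimes> C^co \<otimes> C \<rightarrow> C. *)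
definition hopf_heap :: "(('c,'k::field) vec \<Rightarrow> ('c \<times> 'c,'k) vec) \<Rightarrow> (('c,'k) vec \<Rightarrow> 'k)
    \<Rightarrow> (('c,'k) vec \<Rightarrow> ('c,'k) vec \<Rightarrow> ('c,'k) vec \<Rightarrow> ('c,'k) vec) \<Rightarrow> bool" where
  "hopf_heap \<Delta> \<epsilon> chi \<longleftrightarrow> coalgebra \<Delta> \<epsilon> \<and> trilin chi
     \<and> (\<forall>a b c. \<Delta> (chi a b c) = tlift (\<lambda>a1 a2. tlift (\<lambda>b1 b2. tlift (\<lambda>c1 c2.
            tsr (chi a1 b2 c1) (chi a2 b1 c2)) (\<Delta> c)) (\<Delta> b)) (\<Delta> a))
     \<and> (\<forall>a b c. \<epsilon> (chi a b c) = \<epsilon> a * \<epsilon> b * \<epsilon> c)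
     \<and> (\<forall>a b c d e. chi (chi a b c) d e = chi a b (chi c d e))
     \<and> (\<forall>a c. tlift (\<lambda>c1 c2. chi c1 c2 a) (\<Delta> c) = sc (\<epsilon> c) a)
     \<and> (\<forall>a c. tlift (\<lambda>c1 c2. chi a c1 c2) (\<Delta> c) = sc (\<epsilon> c) a)"

definition grunspan_map :: "(('c,'k::field) vec \<Rightarrow> ('c \<times> 'c,'k) vec) \<Rightarrow> (('c,'k) vec \<Rightarrow> 'k)
    \<Rightarrow> (('c,'k) vec \<Rightarrow> ('c,'k) vec \<Rightarrow> ('c,'k) vec \<Rightarrow> ('c,'k) vec)
    \<Rightarrow> (('c,'k) vec \<Rightarrow> ('c,'k) vec) \<Rightarrow> bool" where
  "grunspan_map \<Delta> \<epsilon> chi \<theta> \<longleftrightarrow> coalg_map \<Delta> \<epsilon> \<Delta> \<epsilon> \<theta>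
     \<and> (\<forall>a b c d e. chi (chi a b (\<theta> c)) d e = chi a (chi d c b) e)"

definition fsc :: "'k::field \<Rightarrow> (('c,'k) vec \<Rightarrow> ('c,'k) vec) \<Rightarrow> ('c,'k) vec \<Rightarrow> ('c,'k) vec" where
  "fsc c f = (\<lambda>v. sc c (f v))"

definition transl :: "(('c,'k::field) vec \<Rightarrow> ('c,'k) vec \<Rightarrow> ('c,'k) vec \<Rightarrow> ('c,'k) vec)
    \<Rightarrow> ('c,'k) vec \<Rightarrow> ('c,'k) vec \<Rightarrow> ('c,'k) vec \<Rightarrow> ('c,'k) vec" where
  "transl chi a b = (\<lambda>v. chi v a b)"

definition Tn :: "(('c,'k::field) vec \<Rightarrow> ('c,'k) vec \<Rightarrow> ('c,'k) vec \<Rightarrow> ('c,'k) vec)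
    \<Rightarrow> (('c,'k) vec \<Rightarrow> ('c,'k) vec) set" where
  "Tn chi = module.span fsc {transl chi a b | a b. True}"

end

theory Submission
  imports Defs
begin

text \<open>
Everything rests on one observation: since \<open>can\<close> is bijective, two linear maps on
\<open>C \<otimes> C\<close> agree as soon as they agree on the elements \<open>can (c \<otimes> h) = c\<^sub>1 \<otimes> c\<^sub>2\<cdot>h\<close>,
on which \<open>\<tau>\<close> takes the value \<open>\<epsilon>(c) h\<close>. Checking on these elements yields the calculus of
the cotranslation map: \<open>\<tau>(a \<otimes> b\<cdot>h) = \<tau>(a \<otimes> b) h\<close>, \<open>\<tau>(a\<cdot>h \<otimes> b) = S(h) \<tau>(a \<otimes> b)\<close>,
\<open>\<Delta>\<tau>(a \<otimes> b) = \<tau>(a\<^sub>2 \<otimes> b\<^sub>1) \<otimes> \<tau>(a\<^sub>1 \<otimes> b\<^sub>2)\<close> and \<open>\<epsilon>\<tau> = \<epsilon> \<otimes> \<epsilon>\<close>.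
The heap axioms are immediate from these rules, and the Grunspan identity reduces to
\<open>S\<tau>(c \<otimes> b) = \<tau>(b \<otimes> \<vartheta>(c))\<close>: the maps \<open>c \<otimes> b \<mapsto> S\<tau>(c \<otimes> b)\<close> and \<open>c \<otimes> b \<mapsto> \<tau>(b \<otimes> \<vartheta>(c))\<close>
are a left and a right convolution inverse of \<open>\<tau>\<close>.
Finally the right action \<open>h \<mapsto> (v \<mapsto> v\<cdot>h)\<close> is injective because \<open>can\<close> is, the translation
\<open>\<tau>\<^sub>a\<^sup>b\<close> is the action of \<open>\<tau>(a \<otimes> b)\<close>, and every \<open>h\<close> is of the form \<open>\<tau>(can (e \<otimes> h))\<close> with
\<open>\<epsilon>(e) = 1\<close>; so the action identifies \<open>H\<close> with \<open>Tn\<^sup>r C\<close>.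
\<close>

abbreviation lookup where "lookup \<equiv> Poly_Mapping.lookup"
abbreviation keys where "keys \<equiv> Poly_Mapping.keys"

section \<open>Finitely supported vectors, tensors and linear maps\<close>

lemma lookup_sc [simp]: "lookup (sc c v) k = c * lookup v k"
  unfolding sc_def by transfer (auto simp: when_def)

lemma sc_add_left: "sc (a + b) v = sc a v + sc b v"
  by (rule poly_mapping_eqI) (simp add: lookup_add distrib_right)

lemma sc_add_right: "sc a (v + w) = sc a v + sc a w"
  by (rule poly_mapping_eqI) (simp add: lookup_add distrib_left)

lemma sc_sc [simp]: "sc a (sc b v) = sc (a * b) v"
  by (rule poly_mapping_eqI) simp

lemma sc_one [simp]: "sc 1 v = v"
  by (rule poly_mapping_eqI) simp

lemma sc_zero_left [simp]: "sc 0 v = 0"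
  by (rule poly_mapping_eqI) simp

lemma sc_zero_right [simp]: "sc a 0 = 0"
  by (rule poly_mapping_eqI) simp

lemma sc_sum_right: "sc a (sum f A) = (\<Sum>x\<in>A. sc a (f x))"
  by (rule poly_mapping_eqI) (simp add: lookup_sum sum_distrib_left)

lemma sc_sum_left: "sc (sum f A) v = (\<Sum>x\<in>A. sc (f x) v)"
  by (rule poly_mapping_eqI) (simp add: lookup_sum sum_distrib_right)

lemma sc_bv_cancel: "sc a (bv i) = sc b (bv i) \<Longrightarrow> a = b"
  by (metis bv_def lookup_sc lookup_single_eq mult_1_right)

lemma lookup_bv: "lookup (bv i) k = (if i = k then 1 else 0)"
  unfolding bv_def by (simp add: lookup_single)

lemma keys_bv [simp]: "keys (bv i :: ('a,'k::field) vec) = {i}"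
  unfolding bv_def by simp

lemma vec_eq_sum_bv: "v = (\<Sum>k\<in>keys v. sc (lookup v k) (bv k))"
proof (rule poly_mapping_eqI)
  fix j
  have "lookup (\<Sum>k\<in>keys v. sc (lookup v k) (bv k)) j = (\<Sum>k\<in>keys v. if k = j then lookup v k else 0)"
    by (simp add: lookup_sum lookup_bv if_distrib[of "\<lambda>x. _ * x"] cong: if_cong)
  also have "\<dots> = lookup v j"
    by (simp add: sum.delta' in_keys_iff)
  finally show "lookup v j = lookup (\<Sum>k\<in>keys v. sc (lookup v k) (bv k)) j"
    by simp
qed

lemma lookup_tsr [simp]: "lookup (tsr x y) p = lookup x (fst p) * lookup y (snd p)"
proof -
  have "lookup (tsr x y) p = (\<Sum>q\<in>keys x \<times> keys y. (lookup x (fst q) * lookup y (snd q) when q = p))"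
    unfolding tsr_def by (simp add: lookup_sum lookup_single)
  also have "\<dots> = lookup x (fst p) * lookup y (snd p)"
    by (cases p) (auto simp: when_def in_keys_iff)
  finally show ?thesis .
qed

lemma keys_tsr: "keys (tsr x y) \<subseteq> keys x \<times> keys y"
  by (auto simp: in_keys_iff)

lemma tsr_bv: "tsr (bv i) (bv j) = bv (i, j)"
  by (rule poly_mapping_eqI) (auto simp: lookup_bv)

lemma tsr_sc_left: "tsr (sc c x) y = sc c (tsr x y)"
  by (rule poly_mapping_eqI) (simp add: mult.assoc)

lemma tsr_sc_right: "tsr x (sc c y) = sc c (tsr x y)"
  by (rule poly_mapping_eqI) (simp add: mult.left_commute)

lemma tsr_zero_right [simp]: "tsr x 0 = 0"
  by (rule poly_mapping_eqI) simp

lemma tsr_eq_zero_imp: "tsr x y = 0 \<Longrightarrow> x \<noteq> 0 \<Longrightarrow> y = 0"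
  by (metis lookup_tsr lookup_zero mult_eq_0_iff poly_mapping_eqI fst_conv snd_conv)

lemma linD: "lin f \<Longrightarrow> f (x + y) = f x + f y" "lin f \<Longrightarrow> f (sc c x) = sc c (f x)"
  by (auto simp: lin_def)

lemma lin_zero: "lin f \<Longrightarrow> f 0 = 0"
  using linD(2)[of f 0 0] by simp

lemma lin_sum: "lin f \<Longrightarrow> f (sum g A) = (\<Sum>x\<in>A. f (g x))"
  by (induct A rule: infinite_finite_induct) (auto simp: lin_zero linD)

lemma lin_diff: "lin f \<Longrightarrow> f (x - y) = f x - f y"
  using linD(1)[of f "x - y" y] by (simp add: algebra_simps)

lemma linfD: "linf f \<Longrightarrow> f (x + y) = f x + f y" "linf f \<Longrightarrow> f (sc c x) = c * f x"
  by (auto simp: linf_def)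

lemma linf_sum: "linf f \<Longrightarrow> f (sum g A) = (\<Sum>x\<in>A. f (g x))"
proof -
  assume f: "linf f"
  have "f 0 = 0"
    using linfD(2)[OF f, of 0 0] by simp
  with f show ?thesis
    by (induct A rule: infinite_finite_induct) (auto simp: linfD)
qed

lemma bilinD: "bilin B \<Longrightarrow> lin (B x)" "bilin B \<Longrightarrow> lin (\<lambda>x. B x y)"
  by (auto simp: bilin_def)

lemma lin_eq_sum_bv: "lin f \<Longrightarrow> f v = (\<Sum>k\<in>keys v. sc (lookup v k) (f (bv k)))"
  by (subst vec_eq_sum_bv) (simp add: lin_sum linD)

lemma lin_eq_on_bv:
  assumes "lin f" "lin g" "\<And>i. f (bv i) = g (bv i)"
  shows "f = g"
proof
  fix v
  have "f v = (\<Sum>k\<in>keys v. sc (lookup v k) (f (bv k)))"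
    by (rule lin_eq_sum_bv) fact
  also have "\<dots> = (\<Sum>k\<in>keys v. sc (lookup v k) (g (bv k)))"
    using assms(3) by simp
  also have "\<dots> = g v"
    by (rule lin_eq_sum_bv[symmetric]) fact
  finally show "f v = g v" .
qed

lemma lin_eq_on_tsr: "lin f \<Longrightarrow> lin g \<Longrightarrow> (\<And>x y. f (tsr x y) = g (tsr x y)) \<Longrightarrow> f = g"
  by (rule lin_eq_on_bv) (auto simp: tsr_bv[symmetric])

lemma bilin_eq_sum_bv:
  assumes "bilin B"
  shows "B x y = (\<Sum>i\<in>keys x. \<Sum>j\<in>keys y. sc (lookup x i * lookup y j) (B (bv i) (bv j)))"
proof -
  have "B x y = (\<Sum>i\<in>keys x. sc (lookup x i) (B (bv i) y))"
    by (rule lin_eq_sum_bv[OF bilinD(2)[OF assms]])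
  also have "\<dots> = (\<Sum>i\<in>keys x. sc (lookup x i) (\<Sum>j\<in>keys y. sc (lookup y j) (B (bv i) (bv j))))"
    using lin_eq_sum_bv[OF bilinD(1)[OF assms], where v = y] by simp
  finally have "B x y = \<dots>" .
  then show ?thesis by (simp add: sc_sum_right)
qed

lemma lin_id [intro!]: "lin (\<lambda>x. x)"
  by (simp add: lin_def)

lemma lin_sc_comp [intro!]: "lin g \<Longrightarrow> lin (\<lambda>x. sc c (g x))"
  by (simp add: lin_def sc_add_right mult.commute)

lemma lin_linf_sc_comp [intro!]: "linf \<phi> \<Longrightarrow> lin g \<Longrightarrow> lin (\<lambda>x. sc (\<phi> (g x)) v)"
  by (simp add: lin_def linf_def sc_add_left)

lemma lin_tsr_left_comp [intro!]: "lin g \<Longrightarrow> lin (\<lambda>x. tsr (g x) y)"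
  by (auto simp: lin_def tsr_sc_left intro!: poly_mapping_eqI simp: lookup_add distrib_right)

lemma lin_tsr_right_comp [intro!]: "lin g \<Longrightarrow> lin (\<lambda>x. tsr y (g x))"
  by (auto simp: lin_def tsr_sc_right intro!: poly_mapping_eqI simp: lookup_add distrib_left)

lemma lin_comp: "lin f \<Longrightarrow> lin g \<Longrightarrow> lin (\<lambda>x. f (g x))"
  by (simp add: lin_def)

lemma bilinI [intro!]: "(\<And>x. lin (B x)) \<Longrightarrow> (\<And>y. lin (\<lambda>x. B x y)) \<Longrightarrow> bilin B"
  by (simp add: bilin_def)

lemma trilinI [intro!]:
  "(\<And>x y. lin (T x y)) \<Longrightarrow> (\<And>x z. lin (\<lambda>y. T x y z)) \<Longrightarrow> (\<And>y z. lin (\<lambda>x. T x y z)) \<Longrightarrow> trilin T"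
  by (simp add: trilin_def)

section \<open>Linear maps out of tensor products\<close>

lemma tlift_eq_sum_superset:
  "finite A \<Longrightarrow> keys t \<subseteq> A \<Longrightarrow> tlift B t = (\<Sum>p\<in>A. sc (lookup t p) (B (bv (fst p)) (bv (snd p))))"
  unfolding tlift_def by (rule sum.mono_neutral_left) (auto simp: in_keys_iff)

lemma lin_tlift [simp, intro]: "lin (tlift B)"
proof -
  have "tlift B (x + y) = tlift B x + tlift B y" for x y
    using keys_add[of x y]
    by (simp add: tlift_eq_sum_superset[of "keys x \<union> keys y"] lookup_add sc_add_left sum.distrib)
  moreover have "tlift B (sc c x) = sc c (tlift B x)" for c x
    by (simp add: tlift_eq_sum_superset[of "keys x"] in_keys_iff subset_iff sc_sum_right)
  ultimately show ?thesis by (simp add: lin_def)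
qed

lemma lin_tlift_comp [intro!]: "lin g \<Longrightarrow> lin (\<lambda>x. tlift B (g x))"
  using lin_tlift[of B] by (simp add: lin_def)

lemma lin_tlift_param [intro!]: "(\<And>a b. lin (\<lambda>x. B x a b)) \<Longrightarrow> lin (\<lambda>x. tlift (B x) t)"
  by (simp add: lin_def tlift_def sc_add_right sum.distrib sc_sum_right mult.commute)

lemma tlift_sc_fun: "tlift (\<lambda>x y. sc c (B x y)) t = sc c (tlift B t)"
  unfolding tlift_def by (simp add: sc_sum_right mult.commute)

lemma tlift_zero_fun [simp]: "tlift (\<lambda>x y. 0) t = 0"
  unfolding tlift_def by simp

lemma lin_tlift_commute: "lin f \<Longrightarrow> f (tlift B t) = tlift (\<lambda>x y. f (B x y)) t"
  unfolding tlift_def by (simp add: lin_sum linD)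

lemma linf_tlift_commute: "linf g \<Longrightarrow> sc (g (tlift B t)) v = tlift (\<lambda>x y. sc (g (B x y)) v) t"
  unfolding tlift_def by (simp add: linf_sum linfD sc_sum_left)

lemma tlift_bv [simp]: "tlift B (bv (i, j)) = B (bv i) (bv j)"
  unfolding tlift_def by (simp add: lookup_bv)

lemma tlift_tsr: "bilin B \<Longrightarrow> tlift B (tsr x y) = B x y"
  by (simp add: tlift_eq_sum_superset[OF _ keys_tsr] sum.cartesian_product split_beta
      bilin_eq_sum_bv[of B x y])

lemma tlift_cong_bv: "(\<And>i j. B (bv i) (bv j) = B' (bv i) (bv j)) \<Longrightarrow> tlift B t = tlift B' t"
  unfolding tlift_def by simp

lemma tlift_cong: "(\<And>x y. B x y = B' x y) \<Longrightarrow> tlift B t = tlift B' t"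
  by (rule tlift_cong_bv) simp

lemma tlift_swap:
  "tlift (\<lambda>x y. tlift (\<lambda>z w. B x y z w) t2) t1 = tlift (\<lambda>z w. tlift (\<lambda>x y. B x y z w) t1) t2"
  unfolding tlift_def sc_sum_right sc_sc by (subst sum.swap) (simp add: mult.commute)

lemma tlift_tsr_id [simp]: "tlift tsr t = t"
proof -
  have "tlift tsr = (\<lambda>t. t)"
    by (rule lin_eq_on_bv) (auto simp: tsr_bv)
  then show ?thesis by metis
qed

lemma tassoc_tsr: "tassoc (tsr x q) = tlift (\<lambda>y z. tsr (tsr x y) z) q"
  unfolding tassoc_def by (rule tlift_tsr) auto

definition lin_ext :: "('a \<Rightarrow> ('b,'k::field) vec) \<Rightarrow> ('a,'k) vec \<Rightarrow> ('b,'k) vec" where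
  "lin_ext g x = (\<Sum>i\<in>keys x. sc (lookup x i) (g i))"

lemma lin_ext_bv [simp]: "lin_ext g (bv i) = g i"
  by (simp add: lin_ext_def lookup_bv bv_def)

lemma lin_lin_ext_comp [intro!]: "lin f \<Longrightarrow> lin (\<lambda>x. lin_ext g (f x))"
proof (erule lin_comp[rotated])
  have sup: "lin_ext g x = (\<Sum>i\<in>A. sc (lookup x i) (g i))" if "finite A" "keys x \<subseteq> A" for x A
    unfolding lin_ext_def using that by (intro sum.mono_neutral_left) (auto simp: in_keys_iff)
  have "lin_ext g (x + y) = lin_ext g x + lin_ext g y" for x y
    by (simp add: sup[of "keys x \<union> keys y"] keys_add lookup_add sc_add_left sum.distrib)
  moreover have "lin_ext g (sc c x) = sc c (lin_ext g x)" for c x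
    by (simp add: sup[of "keys x"] in_keys_iff sc_sum_right subset_iff)
  ultimately show "lin (lin_ext g)" by (simp add: lin_def)
qed

lemma lin_lin_ext_param [intro!]: "(\<And>i. lin (\<lambda>y. g y i)) \<Longrightarrow> lin (\<lambda>y. lin_ext (g y) x)"
  by (simp add: lin_def lin_ext_def sc_add_right sum.distrib sc_sum_right mult.commute)

definition trilin_ext ::
  "(('a,'k::field) vec \<Rightarrow> ('b,'k) vec \<Rightarrow> ('c,'k) vec \<Rightarrow> ('d,'k) vec)
    \<Rightarrow> ('a,'k) vec \<Rightarrow> ('b,'k) vec \<Rightarrow> ('c,'k) vec \<Rightarrow> ('d,'k) vec" where
  "trilin_ext T x y z = lin_ext (\<lambda>i. lin_ext (\<lambda>j. lin_ext (\<lambda>k. T (bv i) (bv j) (bv k)) z) y) x"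

lemma trilin_trilin_ext: "trilin (trilin_ext T)"
  unfolding trilin_ext_def by (intro trilinI) auto

lemma trilin_ext_bv [simp]: "trilin_ext T (bv i) (bv j) (bv k) = T (bv i) (bv j) (bv k)"
  by (simp add: trilin_ext_def)

section \<open>Coalgebras\<close>

locale coalg =
  fixes \<Delta> :: "('c,'k::field) vec \<Rightarrow> ('c \<times> 'c,'k) vec" and \<epsilon> :: "('c,'k) vec \<Rightarrow> 'k"
  assumes coalgebra: "coalgebra \<Delta> \<epsilon>"
begin

lemma lin_comult: "lin \<Delta>" and linf_counit: "linf \<epsilon>"
  using coalgebra by (auto simp: coalgebra_def)

lemma lin_comult_comp [intro!]: "lin g \<Longrightarrow> lin (\<lambda>x. \<Delta> (g x))"
  using lin_comult by (simp add: lin_def)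

lemma lin_counit_sc_comp [intro!]: "lin g \<Longrightarrow> lin (\<lambda>x. sc (\<epsilon> (g x)) v)"
  using linf_counit by (rule lin_linf_sc_comp)

lemma counit_left: "lin g \<Longrightarrow> tlift (\<lambda>x y. sc (\<epsilon> x) (g y)) (\<Delta> c) = g c"
  using coalgebra lin_tlift_commute[of g "\<lambda>x y. sc (\<epsilon> x) y" "\<Delta> c"]
  by (simp add: coalgebra_def linD)

lemma counit_right: "lin g \<Longrightarrow> tlift (\<lambda>x y. sc (\<epsilon> y) (g x)) (\<Delta> c) = g c"
  using coalgebra lin_tlift_commute[of g "\<lambda>x y. sc (\<epsilon> y) x" "\<Delta> c"]
  by (simp add: coalgebra_def linD)

lemma coassoc_trilin:
  assumes "trilin T"
  shows "tlift (\<lambda>x y. tlift (\<lambda>x1 x2. T x1 x2 y) (\<Delta> x)) (\<Delta> c) =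
         tlift (\<lambda>x y. tlift (\<lambda>y1 y2. T x y1 y2) (\<Delta> y)) (\<Delta> c)"
proof -
  have T1: "lin (\<lambda>x. T x y z)" and T2: "lin (\<lambda>y. T x y z)" and T3: "lin (T x y)" for x y z
    using assms by (auto simp: trilin_def)
  define \<Phi> where "\<Phi> = tlift (\<lambda>p z. tlift (\<lambda>x y. T x y z) p)"
  have "bilin (\<lambda>p z. tlift (\<lambda>x y. T x y z) p)"
    by (intro bilinI lin_tlift_comp lin_tlift_param lin_id) (use T3 in \<open>simp add: lin_def\<close>)
  then have \<Phi>_tsr: "\<Phi> (tsr p z) = tlift (\<lambda>x y. T x y z) p" for p z
    unfolding \<Phi>_def by (rule tlift_tsr)
  have T12: "bilin (\<lambda>x y. T x y z)" for z
    using T1 T2 by (intro bilinI) auto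
  have "\<Phi> (tlift (\<lambda>x y. tsr (\<Delta> x) y) (\<Delta> c)) = tlift (\<lambda>x y. tlift (\<lambda>x1 x2. T x1 x2 y) (\<Delta> x)) (\<Delta> c)"
    unfolding \<Phi>_def by (simp add: lin_tlift_commute \<Phi>_tsr[unfolded \<Phi>_def])
  moreover have "\<Phi> (tassoc (tlift (\<lambda>x y. tsr x (\<Delta> y)) (\<Delta> c))) =
      tlift (\<lambda>x y. tlift (\<lambda>y1 y2. T x y1 y2) (\<Delta> y)) (\<Delta> c)"
    unfolding \<Phi>_def tassoc_def
    by (simp add: lin_tlift_commute tassoc_tsr[unfolded tassoc_def] \<Phi>_tsr[unfolded \<Phi>_def]
        tlift_tsr[OF T12])
  ultimately show ?thesis
    using coalgebra by (simp add: coalgebra_def)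
qed

text \<open>Coassociativity holds for arbitrary \<open>T\<close>, because \<open>tlift\<close> only evaluates \<open>T\<close> on basis
  vectors, where it agrees with its trilinear extension.\<close>

lemma coassoc_tlift:
  "tlift (\<lambda>x y. tlift (\<lambda>x1 x2. T x1 x2 y) (\<Delta> x)) (\<Delta> c) =
   tlift (\<lambda>x y. tlift (\<lambda>y1 y2. T x y1 y2) (\<Delta> y)) (\<Delta> c)"
proof -
  have "tlift (\<lambda>x y. tlift (\<lambda>x1 x2. T x1 x2 y) (\<Delta> x)) (\<Delta> c) =
        tlift (\<lambda>x y. tlift (\<lambda>x1 x2. trilin_ext T x1 x2 y) (\<Delta> x)) (\<Delta> c)"
    by (intro tlift_cong_bv) simp
  also have "\<dots> = tlift (\<lambda>x y. tlift (\<lambda>y1 y2. trilin_ext T x y1 y2) (\<Delta> y)) (\<Delta> c)"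
    by (rule coassoc_trilin[OF trilin_trilin_ext])
  also have "\<dots> = tlift (\<lambda>x y. tlift (\<lambda>y1 y2. T x y1 y2) (\<Delta> y)) (\<Delta> c)"
    by (intro tlift_cong_bv) simp
  finally show ?thesis .
qed

lemma exists_counit_eq_one: "\<exists>e. \<epsilon> e = 1"
proof -
  obtain c :: "('c,'k) vec" where "c \<noteq> 0"
    using coalgebra by (auto simp: coalgebra_def)
  moreover have "c = tlift (\<lambda>x y. sc (\<epsilon> x) y) (\<Delta> c)"
    using counit_left[OF lin_id] by simp
  ultimately obtain v where v: "\<epsilon> v \<noteq> 0"
    by (metis sc_zero_left tlift_zero_fun tlift_cong)
  then have "\<epsilon> (sc (1 / \<epsilon> v) v) = 1"
    by (simp add: linfD(2)[OF linf_counit])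
  then show ?thesis ..
qed

end

section \<open>Hopf algebras\<close>

locale hopf_alg =
  fixes m :: "('h,'k::field) vec \<Rightarrow> ('h,'k) vec \<Rightarrow> ('h,'k) vec" and u :: "('h,'k) vec"
    and \<Delta> :: "('h,'k) vec \<Rightarrow> ('h \<times> 'h,'k) vec" and \<epsilon> :: "('h,'k) vec \<Rightarrow> 'k"
    and S :: "('h,'k) vec \<Rightarrow> ('h,'k) vec"
  assumes hopf_algebra: "hopf_algebra m u \<Delta> \<epsilon> S"
begin

sublocale coalg \<Delta> \<epsilon>
  using hopf_algebra by unfold_locales (simp add: hopf_algebra_def)

lemma bilin_mult: "bilin m" and mult_assoc: "m (m x y) z = m x (m y z)"
  and mult_unit_left [simp]: "m u x = x" and mult_unit_right [simp]: "m x u = x"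
  and comult_mult: "\<Delta> (m g h) = tlift (\<lambda>a b. tlift (\<lambda>c d. tsr (m a c) (m b d)) (\<Delta> h)) (\<Delta> g)"
  and comult_unit: "\<Delta> u = tsr u u"
  and counit_mult: "\<epsilon> (m g h) = \<epsilon> g * \<epsilon> h" and counit_unit [simp]: "\<epsilon> u = 1"
  and lin_antipode: "lin S"
  and antipode_left: "tlift (\<lambda>x y. m (S x) y) (\<Delta> h) = sc (\<epsilon> h) u"
  and antipode_right: "tlift (\<lambda>x y. m x (S y)) (\<Delta> h) = sc (\<epsilon> h) u"
  using hopf_algebra by (auto simp: hopf_algebra_def)

lemma lin_mult_left_comp [intro!]: "lin g \<Longrightarrow> lin (\<lambda>x. m (g x) y)"
  using bilin_mult by (auto simp: bilin_def lin_def)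

lemma lin_mult_right_comp [intro!]: "lin g \<Longrightarrow> lin (\<lambda>x. m y (g x))"
  using bilin_mult by (auto simp: bilin_def lin_def)

lemma lin_antipode_comp [intro!]: "lin g \<Longrightarrow> lin (\<lambda>x. S (g x))"
  using lin_antipode by (auto simp: lin_def)

lemma mult_sc_left: "m (sc k x) y = sc k (m x y)"
  using bilin_mult by (simp add: bilin_def lin_def)

lemma mult_sc_right: "m x (sc k y) = sc k (m x y)"
  using bilin_mult by (simp add: bilin_def lin_def)

lemma counit_antipode: "\<epsilon> (S h) = \<epsilon> h"
proof -
  define v :: "('h,'k) vec" where "v = bv undefined"
  have "sc (\<epsilon> h) v = sc (\<epsilon> (sc (\<epsilon> h) u)) v"
    by (simp add: linfD(2)[OF linf_counit])
  also have "\<dots> = tlift (\<lambda>x y. sc (\<epsilon> (m (S x) y)) v) (\<Delta> h)"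
    by (simp only: antipode_left[symmetric] linf_tlift_commute[OF linf_counit])
  also have "\<dots> = tlift (\<lambda>x y. sc (\<epsilon> y) (sc (\<epsilon> (S x)) v)) (\<Delta> h)"
    by (simp add: counit_mult mult.commute)
  also have "\<dots> = sc (\<epsilon> (S h)) v"
    by (rule counit_right) auto
  finally show ?thesis
    unfolding v_def by (metis sc_bv_cancel)
qed

definition tmult :: "('h \<times> 'h,'k) vec \<Rightarrow> ('h \<times> 'h,'k) vec \<Rightarrow> ('h \<times> 'h,'k) vec" where
  "tmult s t = tlift (\<lambda>a b. tlift (\<lambda>c d. tsr (m a c) (m b d)) t) s"

lemma lin_tmult_left_comp [intro!]: "lin g \<Longrightarrow> lin (\<lambda>x. tmult (g x) t)"
  unfolding tmult_def by auto

lemma lin_tmult_right_comp [intro!]: "lin g \<Longrightarrow> lin (\<lambda>x. tmult t (g x))"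
  unfolding tmult_def by auto

lemma tmult_tsr_left: "tmult (tsr a b) t = tlift (\<lambda>c d. tsr (m a c) (m b d)) t"
  unfolding tmult_def by (rule tlift_tsr) auto

lemma tmult_tsr_right: "tmult s (tsr c d) = tlift (\<lambda>a b. tsr (m a c) (m b d)) s"
  unfolding tmult_def by (intro tlift_cong tlift_tsr) auto

lemma tmult_tsr: "tmult (tsr a b) (tsr c d) = tsr (m a c) (m b d)"
  by (simp add: tmult_tsr_left) (rule tlift_tsr, auto)

lemma tmult_unit_sc_left: "tmult (sc k (tsr u u)) t = sc k t"
  by (simp add: linD(2)[OF lin_tmult_left_comp[OF lin_id]] tmult_tsr_left)

lemma tmult_unit_sc_right: "tmult t (sc k (tsr u u)) = sc k t"
  by (simp add: linD(2)[OF lin_tmult_right_comp[OF lin_id]] tmult_tsr_right)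

lemma tmult_assoc: "tmult (tmult s t) w = tmult s (tmult t w)"
proof -
  have "(\<lambda>s. tmult (tmult s t) w) = (\<lambda>s. tmult s (tmult t w))" for t w
  proof (rule lin_eq_on_tsr)
    fix a b
    have "(\<lambda>t. tmult (tmult (tsr a b) t) w) = (\<lambda>t. tmult (tsr a b) (tmult t w))" for w
    proof (rule lin_eq_on_tsr)
      fix c d
      have "(\<lambda>w. tmult (tmult (tsr a b) (tsr c d)) w) = (\<lambda>w. tmult (tsr a b) (tmult (tsr c d) w))"
        by (rule lin_eq_on_tsr) (auto simp: tmult_tsr mult_assoc)
      then show "tmult (tmult (tsr a b) (tsr c d)) w = tmult (tsr a b) (tmult (tsr c d) w)"
        by metis
    qed auto
    then show "tmult (tmult (tsr a b) t) w = tmult (tsr a b) (tmult t w)"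
      by metis
  qed auto
  then show ?thesis
    by metis
qed

lemma comult_mult_flip_antipode:
  "tlift (\<lambda>h1 h2. tmult (\<Delta> h1) (tlift (\<lambda>x y. tsr (S y) (S x)) (\<Delta> h2))) (\<Delta> h) = sc (\<epsilon> h) (tsr u u)"
proof -
  have "tlift (\<lambda>h1 h2. tmult (\<Delta> h1) (tlift (\<lambda>x y. tsr (S y) (S x)) (\<Delta> h2))) (\<Delta> h)
     = tlift (\<lambda>h1 h2. tlift (\<lambda>a b. tlift (\<lambda>x y. tsr (m a (S y)) (m b (S x))) (\<Delta> h2)) (\<Delta> h1)) (\<Delta> h)"
    by (intro tlift_cong) (subst lin_tlift_commute, force, simp add: tmult_tsr_right, rule tlift_swap)
  also have "\<dots> = tlift (\<lambda>a r. tlift (\<lambda>z y. tlift (\<lambda>b x. tsr (m a (S y)) (m b (S x))) (\<Delta> z)) (\<Delta> r)) (\<Delta> h)"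
    by (subst coassoc_tlift) (rule tlift_cong, rule coassoc_tlift[symmetric])
  also have "\<dots> = tlift (\<lambda>a r. tlift (\<lambda>z y. sc (\<epsilon> z) (tsr (m a (S y)) u)) (\<Delta> r)) (\<Delta> h)"
    by (intro tlift_cong) (subst lin_tlift_commute[symmetric], force, simp add: antipode_right tsr_sc_right)
  also have "\<dots> = tsr (tlift (\<lambda>a r. m a (S r)) (\<Delta> h)) u"
    by (subst lin_tlift_commute) (auto intro!: tlift_cong counit_left)
  finally show ?thesis
    by (simp add: antipode_right tsr_sc_left)
qed

lemma comult_antipode_mult_comult:
  "tlift (\<lambda>h1 h2. tmult (\<Delta> (S h1)) (\<Delta> h2)) (\<Delta> h) = sc (\<epsilon> h) (tsr u u)"
proof -
  have "tlift (\<lambda>h1 h2. tmult (\<Delta> (S h1)) (\<Delta> h2)) (\<Delta> h) = \<Delta> (tlift (\<lambda>h1 h2. m (S h1) h2) (\<Delta> h))"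
    by (simp add: comult_mult tmult_def lin_tlift_commute[OF lin_comult])
  then show ?thesis
    by (simp add: antipode_left linD(2)[OF lin_comult] comult_unit)
qed

text \<open>The two maps \<open>\<Delta> \<circ> S\<close> and \<open>h \<mapsto> S(h\<^sub>2) \<otimes> S(h\<^sub>1)\<close> are a left and a right
  convolution inverse of \<open>\<Delta>\<close>, hence equal.\<close>

lemma comult_antipode: "\<Delta> (S h) = tlift (\<lambda>h1 h2. tsr (S h2) (S h1)) (\<Delta> h)"
proof -
  define L where "L h = tlift (\<lambda>x y. tsr (S y) (S x)) (\<Delta> h)" for h
  have "\<Delta> (S h) = tlift (\<lambda>h1 h2. tmult (\<Delta> (S h1)) (sc (\<epsilon> h2) (tsr u u))) (\<Delta> h)"
    by (simp add: tmult_unit_sc_right) (rule counit_right[symmetric], auto)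
  also have "\<dots> = tlift (\<lambda>h1 h2. tmult (\<Delta> (S h1)) (tlift (\<lambda>k1 k2. tmult (\<Delta> k1) (L k2)) (\<Delta> h2))) (\<Delta> h)"
    by (simp add: comult_mult_flip_antipode L_def)
  also have "\<dots> = tlift (\<lambda>h1 h2. tlift (\<lambda>k1 k2. tmult (tmult (\<Delta> (S h1)) (\<Delta> k1)) (L k2)) (\<Delta> h2)) (\<Delta> h)"
    by (intro tlift_cong) (subst lin_tlift_commute, force, simp add: tmult_assoc)
  also have "\<dots> = tlift (\<lambda>p k2. tlift (\<lambda>h1 k1. tmult (tmult (\<Delta> (S h1)) (\<Delta> k1)) (L k2)) (\<Delta> p)) (\<Delta> h)"
    by (rule coassoc_tlift[symmetric])
  also have "\<dots> = tlift (\<lambda>p k2. tmult (tlift (\<lambda>h1 k1. tmult (\<Delta> (S h1)) (\<Delta> k1)) (\<Delta> p)) (L k2)) (\<Delta> h)"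
    by (intro tlift_cong) (subst lin_tlift_commute[of "\<lambda>w. tmult w _"], auto)
  also have "\<dots> = tlift (\<lambda>p k2. sc (\<epsilon> p) (L k2)) (\<Delta> h)"
    by (simp add: comult_antipode_mult_comult tmult_unit_sc_left)
  also have "\<dots> = L h"
    by (rule counit_left) (unfold L_def[abs_def], rule lin_tlift_comp[OF lin_comult])
  finally show ?thesis
    unfolding L_def .
qed

end

section \<open>The cotranslation map of a Hopf--Galois co-object\<close>

locale galois_coobject = H: hopf_alg m u \<Delta>H \<epsilon>H S
  for m :: "('h,'k::field) vec \<Rightarrow> ('h,'k) vec \<Rightarrow> ('h,'k) vec" and u \<Delta>H \<epsilon>H S +
  fixes \<Delta> :: "('c,'k) vec \<Rightarrow> ('c \<times> 'c,'k) vec" and \<epsilon> :: "('c,'k) vec \<Rightarrow> 'k"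
    and act :: "('c,'k) vec \<Rightarrow> ('h,'k) vec \<Rightarrow> ('c,'k) vec"
  assumes galois: "hopf_galois_coobject m u \<Delta>H \<epsilon>H \<Delta> \<epsilon> act"
begin

sublocale C: coalg \<Delta> \<epsilon>
  using galois by unfold_locales (simp add: hopf_galois_coobject_def module_coalgebra_def)

abbreviation can where "can \<equiv> can_map \<Delta> act"
abbreviation \<tau> where "\<tau> \<equiv> cotrans \<Delta> \<epsilon> act"

lemma bilin_act: "bilin act" and act_unit [simp]: "act c u = c"
  and act_act: "act (act c h) g = act c (m h g)"
  and comult_act: "\<Delta> (act c h) = tlift (\<lambda>c1 c2. tlift (\<lambda>h1 h2. tsr (act c1 h1) (act c2 h2)) (\<Delta>H h)) (\<Delta> c)"
  and counit_act: "\<epsilon> (act c h) = \<epsilon> c * \<epsilon>H h"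
  and bij_can: "bij can"
  using galois by (auto simp: hopf_galois_coobject_def module_coalgebra_def)

lemma lin_act_left_comp [intro!]: "lin g \<Longrightarrow> lin (\<lambda>x. act (g x) h)"
  using bilin_act by (auto simp: bilin_def lin_def)

lemma lin_act_right_comp [intro!]: "lin g \<Longrightarrow> lin (\<lambda>x. act c (g x))"
  using bilin_act by (auto simp: bilin_def lin_def)

lemma lin_can: "lin can"
  unfolding can_map_def by simp

lemma lin_can_comp [intro!]: "lin g \<Longrightarrow> lin (\<lambda>x. can (g x))"
  using lin_can by (simp add: lin_def)

lemma can_tsr: "can (tsr c h) = tlift (\<lambda>x y. tsr x (act y h)) (\<Delta> c)"
  unfolding can_map_def by (rule tlift_tsr) auto

lemma inv_can_can [simp]: "inv can (can s) = s"
  using bij_can by (simp add: bij_def)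

lemma can_inv_can [simp]: "can (inv can t) = t"
  using bij_can by (simp add: bij_def surj_f_inv_f)

lemma lin_inv_can: "lin (inv can)"
proof -
  have "inv can (x + y) = inv can x + inv can y" for x y
    by (metis can_inv_can inv_can_can linD(1)[OF lin_can])
  moreover have "inv can (sc c x) = sc c (inv can x)" for c x
    by (metis can_inv_can inv_can_can linD(2)[OF lin_can])
  ultimately show ?thesis
    by (simp add: lin_def)
qed

lemma lin_cotrans: "lin \<tau>"
  using lin_tlift_comp[OF lin_inv_can] by (simp add: cotrans_def[abs_def])

lemma lin_cotrans_comp [intro!]: "lin g \<Longrightarrow> lin (\<lambda>x. \<tau> (g x))"
  using lin_cotrans by (simp add: lin_def)

lemma lin_eq_on_can_tsr:
  assumes "lin F" "lin G" "\<And>c h. F (can (tsr c h)) = G (can (tsr c h))"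
  shows "F = G"
proof
  fix t
  have "(\<lambda>s. F (can s)) = (\<lambda>s. G (can s))"
    using assms by (intro lin_eq_on_tsr) (auto intro: lin_comp[OF _ lin_can])
  then have "F (can (inv can t)) = G (can (inv can t))"
    by metis
  then show "F t = G t"
    by simp
qed

lemma cotrans_can: "\<tau> (can t) = tlift (\<lambda>c h. sc (\<epsilon> c) h) t"
  by (simp add: cotrans_def)

lemma cotrans_can_tsr: "\<tau> (can (tsr c h)) = sc (\<epsilon> c) h"
  by (simp add: cotrans_can) (rule tlift_tsr, auto)

lemma cotrans_coproduct_act: "tlift (\<lambda>x y. \<tau> (tsr x (act y h))) (\<Delta> c) = sc (\<epsilon> c) h"
  using cotrans_can_tsr[of c h] by (simp add: can_tsr lin_tlift_commute[OF lin_cotrans])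

lemma inv_can_tsr: "inv can (tsr c d) = tlift (\<lambda>c1 c2. tsr c1 (\<tau> (tsr c2 d))) (\<Delta> c)"
proof -
  define \<psi> where "\<psi> = tlift (\<lambda>c d. tlift (\<lambda>c1 c2. tsr c1 (\<tau> (tsr c2 d))) (\<Delta> c))"
  have \<psi>_tsr: "\<psi> (tsr c d) = tlift (\<lambda>c1 c2. tsr c1 (\<tau> (tsr c2 d))) (\<Delta> c)" for c d
    unfolding \<psi>_def by (rule tlift_tsr) auto
  have lin_\<psi>: "lin \<psi>"
    unfolding \<psi>_def by simp
  have "\<psi> (can (tsr c h)) = tsr c h" for c h
  proof -
    have "\<psi> (can (tsr c h)) = tlift (\<lambda>x y. tlift (\<lambda>x1 x2. tsr x1 (\<tau> (tsr x2 (act y h)))) (\<Delta> x)) (\<Delta> c)"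
      unfolding can_tsr lin_tlift_commute[OF lin_\<psi>] \<psi>_tsr ..
    also have "\<dots> = tlift (\<lambda>x y. tsr x (tlift (\<lambda>y1 y2. \<tau> (tsr y1 (act y2 h))) (\<Delta> y))) (\<Delta> c)"
      by (subst C.coassoc_tlift) (rule tlift_cong, rule lin_tlift_commute[symmetric], auto)
    also have "\<dots> = tsr c h"
      by (simp add: cotrans_coproduct_act tsr_sc_right) (rule C.counit_right, auto)
    finally show ?thesis .
  qed
  then have "(\<lambda>s. \<psi> (can s)) = (\<lambda>s. s)"
    using lin_comp[OF lin_\<psi> lin_can] by (intro lin_eq_on_tsr) auto
  from fun_cong[OF this, of "inv can (tsr c d)"] show ?thesis
    by (simp add: \<psi>_tsr)
qed

lemma counit_tensor_can: "tlift (\<lambda>x y. sc (\<epsilon> x) y) (can s) = tlift act s"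
proof -
  have "tlift (\<lambda>x y. sc (\<epsilon> x) y) (can (tsr c h)) = tlift act (tsr c h)" for c h
  proof -
    have "tlift (\<lambda>x y. sc (\<epsilon> x) y) (can (tsr c h)) = tlift (\<lambda>x y. sc (\<epsilon> x) (act y h)) (\<Delta> c)"
      unfolding can_tsr lin_tlift_commute[OF lin_tlift] by (rule tlift_cong) (rule tlift_tsr, auto)
    also have "\<dots> = act c h"
      by (rule C.counit_left) auto
    finally show ?thesis
      by (simp add: tlift_tsr[OF bilin_act])
  qed
  then have "(\<lambda>s. tlift (\<lambda>x y. sc (\<epsilon> x) y) (can s)) = tlift act"
    by (intro lin_eq_on_tsr) auto
  from fun_cong[OF this, of s] show ?thesis
    by simp
qed

lemma act_cotrans_coproduct: "tlift (\<lambda>x y. act x (\<tau> (tsr y d))) (\<Delta> c) = sc (\<epsilon> c) d"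
proof -
  have "tlift (\<lambda>x y. act x (\<tau> (tsr y d))) (\<Delta> c) = tlift act (inv can (tsr c d))"
    unfolding inv_can_tsr lin_tlift_commute[OF lin_tlift]
    by (rule tlift_cong) (rule tlift_tsr[symmetric], rule bilin_act)
  also have "\<dots> = sc (\<epsilon> c) d"
    by (simp flip: counit_tensor_can) (rule tlift_tsr, auto)
  finally show ?thesis .
qed

lemma cotrans_act_right: "\<tau> (tsr a (act b h)) = m (\<tau> (tsr a b)) h"
proof -
  have "(\<lambda>t. \<tau> (tlift (\<lambda>a b. tsr a (act b h)) t)) = (\<lambda>t. m (\<tau> t) h)"
  proof (rule lin_eq_on_can_tsr)
    fix c g
    have "tlift (\<lambda>a b. tsr a (act b h)) (can (tsr c g)) = tlift (\<lambda>x y. tsr x (act y (m g h))) (\<Delta> c)"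
      unfolding can_tsr lin_tlift_commute[OF lin_tlift]
      by (rule tlift_cong) (subst tlift_tsr, auto simp: act_act)
    then show "\<tau> (tlift (\<lambda>a b. tsr a (act b h)) (can (tsr c g))) = m (\<tau> (can (tsr c g))) h"
      by (simp add: cotrans_can_tsr H.mult_sc_left flip: can_tsr)
  qed auto
  from fun_cong[OF this, of "tsr a b"] show ?thesis
    by (subst (asm) tlift_tsr) auto
qed

lemma comult_cotrans:
  "\<Delta>H (\<tau> (tsr a b)) =
   tlift (\<lambda>a1 a2. tlift (\<lambda>b1 b2. tsr (\<tau> (tsr a2 b1)) (\<tau> (tsr a1 b2))) (\<Delta> b)) (\<Delta> a)"
proof -
  define \<Phi> where
    "\<Phi> = tlift (\<lambda>a b. tlift (\<lambda>a1 a2. tlift (\<lambda>b1 b2. tsr (\<tau> (tsr a2 b1)) (\<tau> (tsr a1 b2))) (\<Delta> b)) (\<Delta> a))"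
  have \<Phi>_tsr: "\<Phi> (tsr a b) =
      tlift (\<lambda>a1 a2. tlift (\<lambda>b1 b2. tsr (\<tau> (tsr a2 b1)) (\<tau> (tsr a1 b2))) (\<Delta> b)) (\<Delta> a)" for a b
    unfolding \<Phi>_def by (rule tlift_tsr) auto
  have "(\<lambda>t. \<Delta>H (\<tau> t)) = \<Phi>"
  proof (rule lin_eq_on_can_tsr)
    show "lin \<Phi>"
      unfolding \<Phi>_def by simp
    fix c h
    have "\<Phi> (can (tsr c h)) = tlift (\<lambda>x y. tlift (\<lambda>a1 a2. tlift (\<lambda>y1 y2. tlift (\<lambda>h1 h2.
        tsr (\<tau> (tsr a2 (act y1 h1))) (\<tau> (tsr a1 (act y2 h2)))) (\<Delta>H h)) (\<Delta> y)) (\<Delta> x)) (\<Delta> c)"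
      unfolding can_tsr \<Phi>_def lin_tlift_commute[OF lin_tlift] \<Phi>_tsr[unfolded \<Phi>_def] comult_act
      by (intro tlift_cong) (simp add: lin_tlift_commute[OF lin_tlift], intro tlift_cong tlift_tsr, auto)
    also have "\<dots> = tlift (\<lambda>a1 r. tlift (\<lambda>z y2. tlift (\<lambda>h1 h2.
        tsr (tlift (\<lambda>a2 y1. \<tau> (tsr a2 (act y1 h1))) (\<Delta> z)) (\<tau> (tsr a1 (act y2 h2)))) (\<Delta>H h)) (\<Delta> r)) (\<Delta> c)"
      by (subst C.coassoc_tlift, rule tlift_cong, subst C.coassoc_tlift[symmetric])
        (intro tlift_cong, subst tlift_swap, intro tlift_cong, rule lin_tlift_commute[symmetric], auto)
    also have "\<dots> = tlift (\<lambda>a1 r. tlift (\<lambda>h1 h2. tsr h1 (\<tau> (tsr a1 (act r h2)))) (\<Delta>H h)) (\<Delta> c)"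
      by (simp add: cotrans_coproduct_act tsr_sc_left tlift_sc_fun) (intro tlift_cong C.counit_left, auto)
    also have "\<dots> = tlift (\<lambda>h1 h2. tsr h1 (tlift (\<lambda>a1 r. \<tau> (tsr a1 (act r h2))) (\<Delta> c))) (\<Delta>H h)"
      by (subst tlift_swap, intro tlift_cong, rule lin_tlift_commute[symmetric], auto)
    also have "\<dots> = \<Delta>H (\<tau> (can (tsr c h)))"
      by (simp add: cotrans_coproduct_act cotrans_can_tsr tsr_sc_right tlift_sc_fun linD(2)[OF H.lin_comult])
    finally show "\<Delta>H (\<tau> (can (tsr c h))) = \<Phi> (can (tsr c h))" ..
  qed auto
  from fun_cong[OF this, of "tsr a b"] show ?thesis
    by (simp add: \<Phi>_tsr)
qed

lemma counit_cotrans: "\<epsilon>H (\<tau> (tsr a b)) = \<epsilon> a * \<epsilon> b"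
proof -
  define v :: "('h,'k) vec" where "v = bv undefined"
  have "(\<lambda>t. sc (\<epsilon>H (\<tau> t)) v) = tlift (\<lambda>x y. sc (\<epsilon> x) (sc (\<epsilon> y) v))"
  proof (rule lin_eq_on_can_tsr)
    fix c h
    have "tlift (\<lambda>x y. sc (\<epsilon> x) (sc (\<epsilon> y) v)) (can (tsr c h)) =
        tlift (\<lambda>x y. sc (\<epsilon> x) (sc (\<epsilon> (act y h)) v)) (\<Delta> c)"
      unfolding can_tsr lin_tlift_commute[OF lin_tlift]
      by (intro tlift_cong tlift_tsr bilinI lin_sc_comp C.lin_counit_sc_comp lin_id)
    also have "\<dots> = sc (\<epsilon> (act c h)) v"
      by (rule C.counit_left) auto
    finally show "sc (\<epsilon>H (\<tau> (can (tsr c h)))) v = tlift (\<lambda>x y. sc (\<epsilon> x) (sc (\<epsilon> y) v)) (can (tsr c h))"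
      by (simp add: cotrans_can_tsr counit_act linfD(2)[OF H.linf_counit])
  qed auto
  then have "sc (\<epsilon>H (\<tau> (tsr a b))) v = tlift (\<lambda>x y. sc (\<epsilon> x) (sc (\<epsilon> y) v)) (tsr a b)"
    by metis
  also have "\<dots> = sc (\<epsilon> a) (sc (\<epsilon> b) v)"
    by (intro tlift_tsr bilinI lin_sc_comp C.lin_counit_sc_comp lin_id)
  finally show ?thesis
    unfolding v_def by (simp add: sc_bv_cancel)
qed

lemma mult_cotrans_coproduct: "tlift (\<lambda>x y. m (\<tau> (tsr b x)) (\<tau> (tsr y d))) (\<Delta> c) = sc (\<epsilon> c) (\<tau> (tsr b d))"
proof -
  have "tlift (\<lambda>x y. m (\<tau> (tsr b x)) (\<tau> (tsr y d))) (\<Delta> c) =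
      tlift (\<lambda>x y. \<tau> (tsr b (act x (\<tau> (tsr y d))))) (\<Delta> c)"
    by (simp add: cotrans_act_right)
  also have "\<dots> = \<tau> (tsr b (tlift (\<lambda>x y. act x (\<tau> (tsr y d))) (\<Delta> c)))"
    by (rule lin_tlift_commute[symmetric]) auto
  finally show ?thesis
    by (simp add: act_cotrans_coproduct tsr_sc_right linD(2)[OF lin_cotrans])
qed

lemma can_act_tsr_act:
  "tlift (\<lambda>x y. tsr (act x h) (act y g)) (\<Delta> c) = tlift (\<lambda>h1 h2. can (tsr (act c h1) (m (S h2) g))) (\<Delta>H h)"
proof -
  have "tlift (\<lambda>h1 h2. can (tsr (act c h1) (m (S h2) g))) (\<Delta>H h)
     = tlift (\<lambda>h1 h2. tlift (\<lambda>x y. tlift (\<lambda>k1 k2. tsr (act x k1) (act (act y k2) (m (S h2) g))) (\<Delta>H h1)) (\<Delta> c)) (\<Delta>H h)"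
    unfolding can_tsr comult_act
    by (intro tlift_cong) (simp add: lin_tlift_commute[OF lin_tlift], intro tlift_cong tlift_tsr, auto)
  also have "\<dots> = tlift (\<lambda>x y. tlift (\<lambda>k1 r. tlift (\<lambda>k2 h2. tsr (act x k1) (act y (m (m k2 (S h2)) g))) (\<Delta>H r)) (\<Delta>H h)) (\<Delta> c)"
    by (subst tlift_swap) (simp add: act_act H.mult_assoc H.coassoc_tlift)
  also have "\<dots> = tlift (\<lambda>x y. tlift (\<lambda>k1 r. tsr (act x k1) (act y (m (tlift (\<lambda>k2 h2. m k2 (S h2)) (\<Delta>H r)) g))) (\<Delta>H h)) (\<Delta> c)"
    by (intro tlift_cong) (rule lin_tlift_commute[symmetric], auto)
  also have "\<dots> = tlift (\<lambda>x y. tsr (act x h) (act y g)) (\<Delta> c)"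
    using bilin_act
    by (simp add: H.antipode_right H.mult_sc_left bilin_def lin_def tsr_sc_right)
      (intro tlift_cong H.counit_right, auto)
  finally show ?thesis
    by simp
qed

lemma cotrans_act_left: "\<tau> (tsr (act a h) b) = m (S h) (\<tau> (tsr a b))"
proof -
  have "(\<lambda>t. \<tau> (tlift (\<lambda>a b. tsr (act a h) b) t)) = (\<lambda>t. m (S h) (\<tau> t))"
  proof (rule lin_eq_on_can_tsr)
    fix c g
    have "\<tau> (tlift (\<lambda>a b. tsr (act a h) b) (can (tsr c g))) = \<tau> (tlift (\<lambda>x y. tsr (act x h) (act y g)) (\<Delta> c))"
      unfolding can_tsr lin_tlift_commute[OF lin_tlift] by (intro arg_cong[where f=\<tau>] tlift_cong tlift_tsr) auto
    also have "\<dots> = tlift (\<lambda>h1 h2. sc (\<epsilon> c) (sc (\<epsilon>H h1) (m (S h2) g))) (\<Delta>H h)"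
      by (simp add: can_act_tsr_act lin_tlift_commute[OF lin_cotrans] cotrans_can_tsr counit_act)
    also have "\<dots> = sc (\<epsilon> c) (m (S h) g)"
      unfolding tlift_sc_fun by (rule arg_cong[where f="sc _"], rule H.counit_left, auto)
    also have "\<dots> = m (S h) (\<tau> (can (tsr c g)))"
      by (simp add: cotrans_can_tsr H.mult_sc_right)
    finally show "\<tau> (tlift (\<lambda>a b. tsr (act a h) b) (can (tsr c g))) = m (S h) (\<tau> (can (tsr c g)))" .
  qed auto
  from fun_cong[OF this, of "tsr a b"] show ?thesis
    by (subst (asm) tlift_tsr) auto
qed

lemma mult_cotrans_antipode:
  "tlift (\<lambda>c1 c2. tlift (\<lambda>b1 b2. m (\<tau> (tsr c2 b1)) (S (\<tau> (tsr c1 b2)))) (\<Delta> b)) (\<Delta> c) = sc (\<epsilon> c * \<epsilon> b) u"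
proof -
  have "sc (\<epsilon> c * \<epsilon> b) u = tlift (\<lambda>x y. m x (S y)) (\<Delta>H (\<tau> (tsr c b)))"
    by (simp add: H.antipode_right counit_cotrans)
  also have "\<dots> = tlift (\<lambda>c1 c2. tlift (\<lambda>b1 b2. m (\<tau> (tsr c2 b1)) (S (\<tau> (tsr c1 b2)))) (\<Delta> b)) (\<Delta> c)"
    unfolding comult_cotrans by (simp add: lin_tlift_commute[OF lin_tlift]) (intro tlift_cong tlift_tsr, auto)
  finally show ?thesis
    by simp
qed

lemma antipode_cotrans_mult:
  "tlift (\<lambda>c1 c2. tlift (\<lambda>b1 b2. m (S (\<tau> (tsr c2 b1))) (\<tau> (tsr c1 b2))) (\<Delta> b)) (\<Delta> c) = sc (\<epsilon> c * \<epsilon> b) u"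
proof -
  have "sc (\<epsilon> c * \<epsilon> b) u = tlift (\<lambda>x y. m (S x) y) (\<Delta>H (\<tau> (tsr c b)))"
    by (simp add: H.antipode_left counit_cotrans)
  also have "\<dots> = tlift (\<lambda>c1 c2. tlift (\<lambda>b1 b2. m (S (\<tau> (tsr c2 b1))) (\<tau> (tsr c1 b2))) (\<Delta> b)) (\<Delta> c)"
    unfolding comult_cotrans by (simp add: lin_tlift_commute[OF lin_tlift]) (intro tlift_cong tlift_tsr, auto)
  finally show ?thesis
    by simp
qed

section \<open>The Hopf heap\<close>

abbreviation chi where "chi \<equiv> \<lambda>a b c. act a (\<tau> (tsr b c))"

lemma hopf_heap_chi: "hopf_heap \<Delta> \<epsilon> chi"
  unfolding hopf_heap_def
proof (intro conjI allI)
  show "coalgebra \<Delta> \<epsilon>"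
    by (rule C.coalgebra)
  show "trilin chi"
    by auto
  fix a b c
  show "\<Delta> (chi a b c) =
      tlift (\<lambda>a1 a2. tlift (\<lambda>b1 b2. tlift (\<lambda>c1 c2. tsr (chi a1 b2 c1) (chi a2 b1 c2)) (\<Delta> c)) (\<Delta> b)) (\<Delta> a)"
    unfolding comult_act comult_cotrans
    by (intro tlift_cong) (simp add: lin_tlift_commute[OF lin_tlift], intro tlift_cong tlift_tsr, auto)
  show "\<epsilon> (chi a b c) = \<epsilon> a * \<epsilon> b * \<epsilon> c"
    by (simp add: counit_act counit_cotrans mult.assoc)
  fix d e
  show "chi (chi a b c) d e = chi a b (chi c d e)"
    by (simp add: act_act cotrans_act_right)
next
  fix a c
  show "tlift (\<lambda>c1 c2. chi c1 c2 a) (\<Delta> c) = sc (\<epsilon> c) a"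
    by (rule act_cotrans_coproduct)
  have "tlift (\<lambda>c1 c2. chi a c1 c2) (\<Delta> c) = act a (\<tau> (tlift tsr (\<Delta> c)))"
    by (rule lin_tlift_commute[of "\<lambda>w. act a (\<tau> w)" tsr, symmetric]) auto
  also have "tlift tsr (\<Delta> c) = can (tsr c u)"
    by (simp add: can_tsr)
  finally show "tlift (\<lambda>c1 c2. chi a c1 c2) (\<Delta> c) = sc (\<epsilon> c) a"
    using bilin_act by (simp add: cotrans_can_tsr bilin_def lin_def)
qed

section \<open>The Grunspan map\<close>

definition theta :: "('c,'k) vec \<Rightarrow> ('c,'k) vec" where
  "theta c = tlift (\<lambda>x c3. tlift (\<lambda>c1 c2. act c1 (S (\<tau> (tsr c3 c2)))) (\<Delta> x)) (\<Delta> c)"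

lemma lin_theta: "lin theta"
  using lin_tlift_comp[OF C.lin_comult] by (simp add: theta_def[abs_def])

lemma lin_theta_comp [intro!]: "lin g \<Longrightarrow> lin (\<lambda>x. theta (g x))"
  using lin_theta by (simp add: lin_def)

lemma theta_eq: "theta c = tlift (\<lambda>c1 r. tlift (\<lambda>c2 c3. act c1 (S (\<tau> (tsr c3 c2)))) (\<Delta> r)) (\<Delta> c)"
  unfolding theta_def by (rule C.coassoc_tlift)

lemma cotrans_tsr_theta:
  "\<tau> (tsr b (theta c)) = tlift (\<lambda>c1 r. tlift (\<lambda>c2 c3. m (\<tau> (tsr b c1)) (S (\<tau> (tsr c3 c2)))) (\<Delta> r)) (\<Delta> c)"
proof -
  have "\<tau> (tsr b (theta c)) =
      tlift (\<lambda>c1 r. tlift (\<lambda>c2 c3. \<tau> (tsr b (act c1 (S (\<tau> (tsr c3 c2)))))) (\<Delta> r)) (\<Delta> c)"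
    unfolding theta_eq
    by (subst lin_tlift_commute[of "\<lambda>w. \<tau> (tsr b w)"], force, rule tlift_cong, rule lin_tlift_commute, force)
  then show ?thesis
    by (simp add: cotrans_act_right)
qed

lemma cotrans_theta_coproduct: "tlift (\<lambda>x1 x2. \<tau> (tsr x2 (theta x1))) (\<Delta> x) = sc (\<epsilon> x) u"
proof -
  have "tlift (\<lambda>x1 x2. \<tau> (tsr x2 (theta x1))) (\<Delta> x) =
     tlift (\<lambda>p s. tlift (\<lambda>c' x2. tlift (\<lambda>a b. m (\<tau> (tsr x2 a)) (S (\<tau> (tsr c' b)))) (\<Delta> p)) (\<Delta> s)) (\<Delta> x)"
    unfolding cotrans_tsr_theta
    by (subst C.coassoc_tlift[symmetric], rule tlift_cong, rule C.coassoc_tlift[symmetric])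
  also have "\<dots> = tlift (\<lambda>p s. sc (\<epsilon> p) (sc (\<epsilon> s) u)) (\<Delta> x)"
    by (simp add: mult_cotrans_antipode mult.commute)
  also have "\<dots> = sc (\<epsilon> x) u"
    by (rule C.counit_left) (intro lin_sc_comp C.lin_counit_sc_comp lin_id)
  finally show ?thesis .
qed

lemma mult_cotrans_cotrans_theta:
  "tlift (\<lambda>x1 x2. tlift (\<lambda>y1 y2. m (\<tau> (tsr x2 y1)) (\<tau> (tsr y2 (theta x1)))) (\<Delta> y)) (\<Delta> x) =
   sc (\<epsilon> x * \<epsilon> y) u"
  by (simp add: mult_cotrans_coproduct tlift_sc_fun cotrans_theta_coproduct mult.commute)

text \<open>Inserting \<open>\<epsilon>(c\<^sub>1) \<epsilon>(b\<^sub>2) = \<tau>(c\<^sub>2 \<otimes> b\<^sub>1) \<tau>(b\<^sub>2 \<otimes> \<vartheta>(c\<^sub>1))\<close> and reassociating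
  isolates the product \<open>S\<tau>(c\<^sub>3 \<otimes> b\<^sub>1) \<tau>(c\<^sub>2 \<otimes> b\<^sub>2)\<close>, which collapses to
  \<open>\<epsilon>(c\<^sub>2) \<epsilon>(b\<^sub>1)\<close>.\<close>

lemma antipode_cotrans_expand:
  "S (\<tau> (tsr c b)) = tlift (\<lambda>q1 M. tlift (\<lambda>N r2. m (tlift (\<lambda>q2 c2. tlift (\<lambda>b1 r1.
     m (S (\<tau> (tsr c2 b1))) (\<tau> (tsr q2 r1))) (\<Delta> N)) (\<Delta> M)) (\<tau> (tsr r2 (theta q1)))) (\<Delta> b)) (\<Delta> c)"
proof -
  have "S (\<tau> (tsr c b)) =
      tlift (\<lambda>c1 c2. sc (\<epsilon> c1) (tlift (\<lambda>b1 b2. sc (\<epsilon> b2) (S (\<tau> (tsr c2 b1)))) (\<Delta> b))) (\<Delta> c)"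
    by (subst C.counit_right, force, subst C.counit_left, force, rule refl)
  also have "\<dots> = tlift (\<lambda>c1 c2. tlift (\<lambda>b1 b2. m (S (\<tau> (tsr c2 b1))) (sc (\<epsilon> c1 * \<epsilon> b2) u)) (\<Delta> b)) (\<Delta> c)"
    by (simp add: H.mult_sc_right tlift_sc_fun[symmetric] mult.commute)
  also have "\<dots> = tlift (\<lambda>c1 c2. tlift (\<lambda>b1 b2. m (S (\<tau> (tsr c2 b1)))
       (tlift (\<lambda>q1 q2. tlift (\<lambda>r1 r2. m (\<tau> (tsr q2 r1)) (\<tau> (tsr r2 (theta q1)))) (\<Delta> b2)) (\<Delta> c1))) (\<Delta> b)) (\<Delta> c)"
    by (simp add: mult_cotrans_cotrans_theta)
  also have "\<dots> = tlift (\<lambda>c1 c2. tlift (\<lambda>b1 b2. tlift (\<lambda>q1 q2. tlift (\<lambda>r1 r2.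
        m (m (S (\<tau> (tsr c2 b1))) (\<tau> (tsr q2 r1))) (\<tau> (tsr r2 (theta q1)))) (\<Delta> b2)) (\<Delta> c1)) (\<Delta> b)) (\<Delta> c)"
    by (intro tlift_cong) (subst lin_tlift_commute, force, rule tlift_cong, subst lin_tlift_commute, force,
        simp add: H.mult_assoc)
  also have "\<dots> = tlift (\<lambda>c1 c2. tlift (\<lambda>q1 q2. tlift (\<lambda>b1 b2. tlift (\<lambda>r1 r2.
        m (m (S (\<tau> (tsr c2 b1))) (\<tau> (tsr q2 r1))) (\<tau> (tsr r2 (theta q1)))) (\<Delta> b2)) (\<Delta> b)) (\<Delta> c1)) (\<Delta> c)"
    by (intro tlift_cong) (rule tlift_swap)
  also have "\<dots> = tlift (\<lambda>q1 M. tlift (\<lambda>q2 c2. tlift (\<lambda>N r2. tlift (\<lambda>b1 r1.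
        m (m (S (\<tau> (tsr c2 b1))) (\<tau> (tsr q2 r1))) (\<tau> (tsr r2 (theta q1)))) (\<Delta> N)) (\<Delta> b)) (\<Delta> M)) (\<Delta> c)"
    by (subst C.coassoc_tlift, rule tlift_cong, rule tlift_cong, rule C.coassoc_tlift[symmetric])
  also have "\<dots> = tlift (\<lambda>q1 M. tlift (\<lambda>N r2. tlift (\<lambda>q2 c2. tlift (\<lambda>b1 r1.
        m (m (S (\<tau> (tsr c2 b1))) (\<tau> (tsr q2 r1))) (\<tau> (tsr r2 (theta q1)))) (\<Delta> N)) (\<Delta> M)) (\<Delta> b)) (\<Delta> c)"
    by (intro tlift_cong) (rule tlift_swap)
  also have "\<dots> = tlift (\<lambda>q1 M. tlift (\<lambda>N r2. m (tlift (\<lambda>q2 c2. tlift (\<lambda>b1 r1.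
        m (S (\<tau> (tsr c2 b1))) (\<tau> (tsr q2 r1))) (\<Delta> N)) (\<Delta> M)) (\<tau> (tsr r2 (theta q1)))) (\<Delta> b)) (\<Delta> c)"
    by (intro tlift_cong) (subst lin_tlift_commute[of "\<lambda>w. m w _"], force, rule tlift_cong,
        subst lin_tlift_commute[of "\<lambda>w. m w _"], force, rule refl)
  finally show ?thesis .
qed

lemma antipode_cotrans: "S (\<tau> (tsr c b)) = \<tau> (tsr b (theta c))"
proof -
  have "S (\<tau> (tsr c b)) = tlift (\<lambda>q1 M. tlift (\<lambda>N r2. sc (\<epsilon> M) (sc (\<epsilon> N) (\<tau> (tsr r2 (theta q1))))) (\<Delta> b)) (\<Delta> c)"
    by (subst antipode_cotrans_expand) (simp add: antipode_cotrans_mult H.mult_sc_left mult.commute)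
  also have "\<dots> = tlift (\<lambda>q1 M. sc (\<epsilon> M) (\<tau> (tsr b (theta q1)))) (\<Delta> c)"
    by (intro tlift_cong) (subst tlift_sc_fun, rule arg_cong[where f="sc _"], rule C.counit_left, force)
  also have "\<dots> = \<tau> (tsr b (theta c))"
    by (rule C.counit_right) force
  finally show ?thesis .
qed

lemma grunspan_identity: "chi (chi a b (theta c)) d e = chi a (chi d c b) e"
  by (simp add: act_act cotrans_act_left antipode_cotrans)

lemma counit_theta: "\<epsilon> (theta c) = \<epsilon> c"
proof -
  define v :: "('c,'k) vec" where "v = bv undefined"
  have "sc (\<epsilon> (theta c)) v =
      tlift (\<lambda>x c3. tlift (\<lambda>c1 c2. sc (\<epsilon> (act c1 (S (\<tau> (tsr c3 c2))))) v) (\<Delta> x)) (\<Delta> c)"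
    unfolding theta_def by (simp only: linf_tlift_commute[OF C.linf_counit])
  also have "\<dots> = tlift (\<lambda>x c3. tlift (\<lambda>c1 c2. sc (\<epsilon> c1) (sc (\<epsilon> c2) (sc (\<epsilon> c3) v))) (\<Delta> x)) (\<Delta> c)"
    by (simp add: counit_act H.counit_antipode counit_cotrans mult.commute mult.left_commute)
  also have "\<dots> = sc (\<epsilon> c) v"
    by (subst C.counit_left[symmetric, of "\<lambda>c3. sc (\<epsilon> c3) v"], force,
        rule tlift_cong, rule C.counit_left, force)
  finally show ?thesis
    unfolding v_def by (simp add: sc_bv_cancel)
qed

lemma comult_act_antipode_cotrans:
  "\<Delta> (act c1 (S (\<tau> (tsr c3 c2)))) = tlift (\<lambda>p q. tlift (\<lambda>e1 e2. tlift (\<lambda>f1 f2.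
    tsr (act p (S (\<tau> (tsr e1 f2)))) (act q (\<tau> (tsr f1 (theta e2))))) (\<Delta> c2)) (\<Delta> c3)) (\<Delta> c1)"
proof -
  have "\<Delta>H (S (\<tau> (tsr c3 c2))) =
      tlift (\<lambda>e1 e2. tlift (\<lambda>f1 f2. tsr (S (\<tau> (tsr e1 f2))) (S (\<tau> (tsr e2 f1)))) (\<Delta> c2)) (\<Delta> c3)"
    unfolding H.comult_antipode comult_cotrans
    by (subst lin_tlift_commute, force, rule tlift_cong, subst lin_tlift_commute, force,
        rule tlift_cong, rule tlift_tsr, auto)
  then show ?thesis
    unfolding comult_act
    by (intro tlift_cong) (simp add: lin_tlift_commute[OF lin_tlift] antipode_cotrans[symmetric],
        intro tlift_cong tlift_tsr, auto)
qed

lemma tsr_act_cotrans_coproduct: "tlift (\<lambda>x y. tsr a (act x (\<tau> (tsr y b)))) (\<Delta> c) = sc (\<epsilon> c) (tsr a b)"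
proof -
  have "tlift (\<lambda>x y. tsr a (act x (\<tau> (tsr y b)))) (\<Delta> c) = tsr a (tlift (\<lambda>x y. act x (\<tau> (tsr y b))) (\<Delta> c))"
    by (rule lin_tlift_commute[symmetric]) auto
  then show ?thesis
    by (simp add: act_cotrans_coproduct tsr_sc_right)
qed

text \<open>The coproduct of \<open>\<vartheta>\<close> is computed by showing that both \<open>\<Delta>(\<vartheta>(c))\<close> and
  \<open>\<vartheta>(c\<^sub>1) \<otimes> \<vartheta>(c\<^sub>2)\<close> equal \<open>c\<^sub>1\<cdot>S\<tau>(c\<^sub>3 \<otimes> c\<^sub>2) \<otimes> \<vartheta>(c\<^sub>4)\<close>.\<close>

lemma comult_theta_expand:
  "\<Delta> (theta c) = tlift (\<lambda>p s. tlift (\<lambda>z c3. tlift (\<lambda>e1 e2.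
     tsr (act p (S (\<tau> (tsr e1 z)))) (theta e2)) (\<Delta> c3)) (\<Delta> s)) (\<Delta> c)"
proof -
  have "\<Delta> (theta c) = tlift (\<lambda>c1 r. tlift (\<lambda>c2 c3. \<Delta> (act c1 (S (\<tau> (tsr c3 c2))))) (\<Delta> r)) (\<Delta> c)"
    unfolding theta_eq
    by (subst lin_tlift_commute[OF C.lin_comult], rule tlift_cong, rule lin_tlift_commute[OF C.lin_comult])
  also have "\<dots> = tlift (\<lambda>c1 r. tlift (\<lambda>c2 c3. tlift (\<lambda>p q. tlift (\<lambda>e1 e2. tlift (\<lambda>f1 f2.
      tsr (act p (S (\<tau> (tsr e1 f2)))) (act q (\<tau> (tsr f1 (theta e2))))) (\<Delta> c2)) (\<Delta> c3)) (\<Delta> c1)) (\<Delta> r)) (\<Delta> c)"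
    by (simp only: comult_act_antipode_cotrans)
  also have "\<dots> = tlift (\<lambda>p s. tlift (\<lambda>q r. tlift (\<lambda>c2 c3. tlift (\<lambda>e1 e2. tlift (\<lambda>f1 f2.
      tsr (act p (S (\<tau> (tsr e1 f2)))) (act q (\<tau> (tsr f1 (theta e2))))) (\<Delta> c2)) (\<Delta> c3)) (\<Delta> r)) (\<Delta> s)) (\<Delta> c)"
    by (subst C.coassoc_tlift[symmetric], rule tlift_cong, rule tlift_swap)
  also have "\<dots> = tlift (\<lambda>p s. tlift (\<lambda>z c3. tlift (\<lambda>e1 e2. tlift (\<lambda>q c2. tlift (\<lambda>f1 f2.
      tsr (act p (S (\<tau> (tsr e1 f2)))) (act q (\<tau> (tsr f1 (theta e2))))) (\<Delta> c2)) (\<Delta> z)) (\<Delta> c3)) (\<Delta> s)) (\<Delta> c)"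
    by (rule tlift_cong, subst C.coassoc_tlift[symmetric], rule tlift_cong, rule tlift_swap)
  also have "\<dots> = tlift (\<lambda>p s. tlift (\<lambda>z c3. tlift (\<lambda>e1 e2. tlift (\<lambda>M f2. tlift (\<lambda>q f1.
      tsr (act p (S (\<tau> (tsr e1 f2)))) (act q (\<tau> (tsr f1 (theta e2))))) (\<Delta> M)) (\<Delta> z)) (\<Delta> c3)) (\<Delta> s)) (\<Delta> c)"
    by (rule tlift_cong, rule tlift_cong, rule tlift_cong, rule C.coassoc_tlift[symmetric])
  also have "\<dots> = tlift (\<lambda>p s. tlift (\<lambda>z c3. tlift (\<lambda>e1 e2. tlift (\<lambda>M f2. sc (\<epsilon> M)
      (tsr (act p (S (\<tau> (tsr e1 f2)))) (theta e2))) (\<Delta> z)) (\<Delta> c3)) (\<Delta> s)) (\<Delta> c)"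
    by (intro tlift_cong) (rule tsr_act_cotrans_coproduct)
  also have "\<dots> = tlift (\<lambda>p s. tlift (\<lambda>z c3. tlift (\<lambda>e1 e2.
      tsr (act p (S (\<tau> (tsr e1 z)))) (theta e2)) (\<Delta> c3)) (\<Delta> s)) (\<Delta> c)"
    by (intro tlift_cong) (rule C.counit_left, auto)
  finally show ?thesis .
qed

lemma tlift_tsr_theta_expand:
  "tlift (\<lambda>x y. tsr (theta x) (theta y)) (\<Delta> c) = tlift (\<lambda>p s. tlift (\<lambda>z c3. tlift (\<lambda>e1 e2.
     tsr (act p (S (\<tau> (tsr e1 z)))) (theta e2)) (\<Delta> c3)) (\<Delta> s)) (\<Delta> c)"
proof -
  have "tlift (\<lambda>x y. tsr (theta x) (theta y)) (\<Delta> c) = tlift (\<lambda>y1 y2. tlift (\<lambda>c1 r. tlift (\<lambda>c2 c3.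
      tsr (act c1 (S (\<tau> (tsr c3 c2)))) (theta y2)) (\<Delta> r)) (\<Delta> y1)) (\<Delta> c)"
    unfolding theta_eq[of "_"]
    by (intro tlift_cong) (subst lin_tlift_commute[of "\<lambda>w. tsr w _"], force, rule tlift_cong,
        subst lin_tlift_commute[of "\<lambda>w. tsr w _"], force, rule refl)
  also have "\<dots> = tlift (\<lambda>p s. tlift (\<lambda>z c3. tlift (\<lambda>e1 e2.
      tsr (act p (S (\<tau> (tsr e1 z)))) (theta e2)) (\<Delta> c3)) (\<Delta> s)) (\<Delta> c)"
    by (subst C.coassoc_tlift, rule tlift_cong, rule C.coassoc_tlift)
  finally show ?thesis .
qed

lemma comult_theta: "\<Delta> (theta c) = tlift (\<lambda>x y. tsr (theta x) (theta y)) (\<Delta> c)"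
  by (simp only: comult_theta_expand tlift_tsr_theta_expand)

lemma grunspan_map_theta: "grunspan_map \<Delta> \<epsilon> chi theta"
  unfolding grunspan_map_def coalg_map_def
  using lin_theta comult_theta counit_theta grunspan_identity by auto

end

section \<open>The translation Hopf algebra\<close>

lemma module_fsc: "module (fsc :: 'k::field \<Rightarrow> (('c,'k) vec \<Rightarrow> ('c,'k) vec) \<Rightarrow> _)"
  by unfold_locales (auto simp: fsc_def plus_fun_def sc_add_right sc_add_left)

context galois_coobject
begin

definition ract :: "('h,'k) vec \<Rightarrow> ('c,'k) vec \<Rightarrow> ('c,'k) vec" where
  "ract h = (\<lambda>v. act v h)"

lemma ract_add: "ract (x + y) = ract x + ract y"
  using bilin_act by (auto simp: ract_def bilin_def lin_def)

lemma ract_sc: "ract (sc c x) = fsc c (ract x)"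
  using bilin_act by (auto simp: ract_def fsc_def bilin_def lin_def)

lemma ract_zero: "ract 0 = 0"
  using bilin_act by (auto simp: ract_def bilin_def lin_zero)

lemma ract_unit: "ract u = id"
  by (simp add: ract_def fun_eq_iff)

lemma ract_comp: "ract g \<circ> ract h = ract (m h g)"
  by (simp add: ract_def fun_eq_iff act_act)

text \<open>Injectivity of the action comes from that of \<open>can\<close>: if \<open>v\<cdot>d = 0\<close> for all \<open>v\<close>, then
  \<open>can (c \<otimes> d) = 0\<close> for every \<open>c\<close>.\<close>

lemma inj_ract: "inj ract"
proof (rule injI)
  fix h g
  assume "ract h = ract g"
  then have act_zero: "act v (h - g) = 0" for v
    using lin_diff[OF bilinD(1)[OF bilin_act]] by (simp add: ract_def fun_eq_iff)
  obtain c :: "('c,'k) vec" where "c \<noteq> 0"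
    using C.coalgebra by (auto simp: coalgebra_def)
  moreover have "can (tsr c (h - g)) = can 0"
    by (simp add: can_tsr act_zero lin_zero[OF lin_can])
  then have "tsr c (h - g) = 0"
    using bij_can by (simp add: bij_def inj_eq)
  ultimately show "h = g"
    using tsr_eq_zero_imp by fastforce
qed

lemma inv_ract_ract [simp]: "inv ract (ract h) = h"
  using inj_ract by simp

lemma transl_eq_ract: "transl chi a b = ract (\<tau> (tsr a b))"
  by (simp add: transl_def ract_def)

lemma ract_cotrans_in_Tn: "ract (\<tau> t) \<in> Tn chi"
proof -
  have "ract (\<tau> (\<Sum>p\<in>A. sc (lookup t p) (bv p))) \<in> Tn chi" if "finite A" for A
    using that
  proof (induct A rule: finite_induct)
    case empty
    then show ?case
      using module.span_zero[OF module_fsc]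
      by (simp add: lin_zero[OF lin_cotrans] ract_zero Tn_def zero_fun_def)
  next
    case (insert p A)
    obtain i j where p: "p = (i, j)"
      by (cases p)
    have eq: "ract (\<tau> (\<Sum>p\<in>insert p A. sc (lookup t p) (bv p))) =
        fsc (lookup t p) (transl chi (bv i) (bv j)) + ract (\<tau> (\<Sum>p\<in>A. sc (lookup t p) (bv p)))"
      using insert by (simp add: linD[OF lin_cotrans] ract_add ract_sc transl_eq_ract p tsr_bv)
    have "fsc (lookup t p) (transl chi (bv i) (bv j)) \<in> Tn chi"
      unfolding Tn_def by (intro module.span_scale[OF module_fsc] module.span_base[OF module_fsc]) blast
    then show ?case
      unfolding eq using insert(3) unfolding Tn_def by (rule module.span_add[OF module_fsc])
  qed
  from this[OF finite_keys[of t]] show ?thesis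
    by (simp only: vec_eq_sum_bv[of t, symmetric])
qed

lemma Tn_eq_range_ract: "Tn chi = range ract"
proof
  show "Tn chi \<subseteq> range ract"
  proof
    fix x
    assume "x \<in> Tn chi"
    then show "x \<in> range ract"
      unfolding Tn_def
    proof (rule module.span_induct_alt[OF module_fsc])
      show "0 \<in> range ract"
        using ract_zero by (metis rangeI)
      fix c x y
      assume "x \<in> {transl chi a b |a b. True}" "y \<in> range ract"
      then obtain a b g where "x = transl chi a b" "y = ract g"
        by blast
      then have "fsc c x + y = ract (sc c (\<tau> (tsr a b)) + g)"
        by (simp add: ract_add ract_sc transl_eq_ract)
      then show "fsc c x + y \<in> range ract"
        by simp
    qed
  qed
  show "range ract \<subseteq> Tn chi"
  proof
    fix x
    assume "x \<in> range ract"
    then obtain h where x: "x = ract h"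
      by blast
    obtain e where "\<epsilon> e = 1"
      using C.exists_counit_eq_one by blast
    then have "x = ract (\<tau> (can (tsr e h)))"
      using x by (simp add: cotrans_can_tsr)
    then show "x \<in> Tn chi"
      using ract_cotrans_in_Tn by simp
  qed
qed

lemma translation_coproduct_eq_ract:
  assumes "\<epsilon> e = 1"
  shows "(\<lambda>v. tlift (\<lambda>e1 e2. chi v e1 (act e2 h)) (\<Delta> e)) = ract h"
proof
  fix v
  have "tlift (\<lambda>e1 e2. chi v e1 (act e2 h)) (\<Delta> e) = act v (\<tau> (can (tsr e h)))"
    unfolding can_tsr by (rule lin_tlift_commute[of "\<lambda>w. act v (\<tau> w)", symmetric]) auto
  then show "tlift (\<lambda>e1 e2. chi v e1 (act e2 h)) (\<Delta> e) = ract h v"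
    using assms by (simp add: cotrans_can_tsr ract_def)
qed

lemma Tn_iso:
  "\<exists>\<phi>. (\<forall>a b. \<phi> (transl chi a b) = \<tau> (tsr a b))
     \<and> (\<forall>x\<in>Tn chi. \<forall>y\<in>Tn chi. \<phi> (x + y) = \<phi> x + \<phi> y)
     \<and> (\<forall>c. \<forall>x\<in>Tn chi. \<phi> (fsc c x) = sc c (\<phi> x))
     \<and> bij_betw \<phi> (Tn chi) UNIV
     \<and> id \<in> Tn chi \<and> \<phi> id = u
     \<and> (\<forall>x\<in>Tn chi. \<forall>y\<in>Tn chi. \<phi> (y \<circ> x) = m (\<phi> x) (\<phi> y))
     \<and> (\<forall>a b. \<Delta>H (\<tau> (tsr a b)) =
          tlift (\<lambda>a1 a2. tlift (\<lambda>b1 b2. tsr (\<tau> (tsr a2 b1)) (\<tau> (tsr a1 b2))) (\<Delta> b)) (\<Delta> a))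
     \<and> (\<forall>a b. \<epsilon>H (\<tau> (tsr a b)) = \<epsilon> a * \<epsilon> b)
     \<and> (\<forall>e. \<epsilon> e = 1 \<longrightarrow>
          (\<forall>h. (\<lambda>v. tlift (\<lambda>e1 e2. chi v e1 (act e2 h)) (\<Delta> e)) \<in> Tn chi
               \<and> \<phi> (\<lambda>v. tlift (\<lambda>e1 e2. chi v e1 (act e2 h)) (\<Delta> e)) = h)
          \<and> (\<forall>x\<in>Tn chi. (\<lambda>v. tlift (\<lambda>e1 e2. chi v e1 (act e2 (\<phi> x))) (\<Delta> e)) = x))"
  unfolding Tn_eq_range_ract
  using bij_betw_inv_into[OF inj_on_imp_bij_betw[OF inj_ract]] comult_cotrans counit_cotrans
  by (intro exI[of _ "inv ract"] conjI allI ballI impI)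
    (auto simp: transl_eq_ract translation_coproduct_eq_ract ract_comp
      simp flip: ract_add ract_sc ract_unit)

end

theorem mainTheorem9:
  fixes m :: "('h,'k::field) vec \<Rightarrow> ('h,'k) vec \<Rightarrow> ('h,'k) vec"
    and u :: "('h,'k) vec"
    and \<Delta>H :: "('h,'k) vec \<Rightarrow> ('h \<times> 'h,'k) vec"
    and \<epsilon>H :: "('h,'k) vec \<Rightarrow> 'k"
    and S :: "('h,'k) vec \<Rightarrow> ('h,'k) vec"
    and \<Delta> :: "('c,'k) vec \<Rightarrow> ('c \<times> 'c,'k) vec"
    and \<epsilon> :: "('c,'k) vec \<Rightarrow> 'k"
    and act :: "('c,'k) vec \<Rightarrow> ('h,'k) vec \<Rightarrow> ('c,'k) vec"
  assumes H: "hopf_algebra m u \<Delta>H \<epsilon>H S"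
    and C: "hopf_galois_coobject m u \<Delta>H \<epsilon>H \<Delta> \<epsilon> act"
  shows
    "hopf_heap \<Delta> \<epsilon> (\<lambda>a b c. act a (cotrans \<Delta> \<epsilon> act (tsr b c)))
     \<and> grunspan_map \<Delta> \<epsilon> (\<lambda>a b c. act a (cotrans \<Delta> \<epsilon> act (tsr b c)))
         (\<lambda>c. tlift (\<lambda>x c3. tlift (\<lambda>c1 c2. act c1 (S (cotrans \<Delta> \<epsilon> act (tsr c3 c2)))) (\<Delta> x)) (\<Delta> c))
     \<and> (let chi = (\<lambda>a b c. act a (cotrans \<Delta> \<epsilon> act (tsr b c)));
            \<tau> = cotrans \<Delta> \<epsilon> act;
            T = Tn chi
        in \<exists>\<phi>. (\<forall>a b. \<phi> (transl chi a b) = \<tau> (tsr a b))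
            \<and> (\<forall>x\<in>T. \<forall>y\<in>T. \<phi> (x + y) = \<phi> x + \<phi> y)
            \<and> (\<forall>c. \<forall>x\<in>T. \<phi> (fsc c x) = sc c (\<phi> x))
            \<and> bij_betw \<phi> T UNIV
            \<and> id \<in> T \<and> \<phi> id = u
            \<and> (\<forall>x\<in>T. \<forall>y\<in>T. \<phi> (y \<circ> x) = m (\<phi> x) (\<phi> y))
            \<and> (\<forall>a b. \<Delta>H (\<tau> (tsr a b)) =
                 tlift (\<lambda>a1 a2. tlift (\<lambda>b1 b2. tsr (\<tau> (tsr a2 b1)) (\<tau> (tsr a1 b2))) (\<Delta> b)) (\<Delta> a))
            \<and> (\<forall>a b. \<epsilon>H (\<tau> (tsr a b)) = \<epsilon> a * \<epsilon> b)
            \<and> (\<forall>e. \<epsilon> e = 1 \<longrightarrow>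
                 (\<forall>h. (\<lambda>v. tlift (\<lambda>e1 e2. chi v e1 (act e2 h)) (\<Delta> e)) \<in> T
                      \<and> \<phi> (\<lambda>v. tlift (\<lambda>e1 e2. chi v e1 (act e2 h)) (\<Delta> e)) = h)
                 \<and> (\<forall>x\<in>T. (\<lambda>v. tlift (\<lambda>e1 e2. chi v e1 (act e2 (\<phi> x))) (\<Delta> e)) = x)))"
proof -
  interpret galois_coobject m u \<Delta>H \<epsilon>H S \<Delta> \<epsilon> act
    using H C by unfold_locales
  have "(\<lambda>c. tlift (\<lambda>x c3. tlift (\<lambda>c1 c2. act c1 (S (cotrans \<Delta> \<epsilon> act (tsr c3 c2)))) (\<Delta> x)) (\<Delta> c)) = theta"
    by (simp add: theta_def[abs_def])
  then show ?thesis
    unfolding Let_def using hopf_heap_chi grunspan_map_theta Tn_iso by simp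
qed

end
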